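(* Let $a>0$. For any finite $\Lambda\subset\mathbb Z^2$, any $A\subset\Lambda$ and any $i\in\Lambda$, $$\big\langle h_i^2\,\big|\,|h_j|\le a\ \forall j\in A\big\rangle^0_\Lambda\le 4a^2+4\langle h_i^2\rangle^0_{\Lambda\setminus A}.$$
   Context: Fix an integer $r\ge1$. For each $k\in\mathbb Z^2$ let $\Psi_k:\mathbb R\to\mathbb R$ satisfy: $\Psi_k\equiv0$ if $\|k\|_1>r$; $\Psi_k=\Psi_{-k}$ and $\Psi_k(x)=\Psi_k(-x)$; $\Psi_k$ is $C^2$; $\Psi_k''\ge0$, and there is $c>0$ such that the translation-invariant random walk on $\mathbb Z^2$ with jump rates $P_c(0,j)=1$ if $\Psi_j''(h)\ge c$ for all $h$ and $0$ otherwise is irreducible. For finite $\Lambda\subset\mathbb Z^2$ and $b\in\mathbb R$, $$\mu^b_\Lambda(d\underline h)=\frac1{Z^b_\Lambda}\exp\Big\{-\sum_{\langle ij\rangle\cap\Lambda\neq\emptyset}\Psi_{j-i}(h_i-h_j)\Big\}\prod_{i\in\Lambda}dh_i\prod_{i\notin\Lambda}\delta_b(dh_i),$$ the sum being over pairs of distinct sites with $\|j-i\|_\infty\le r$ meeting $\Lambda$; $\langle\cdot\rangle^b_\Lambda$ denotes expectation. *)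

theory Defs
  imports "HOL-Analysis.Analysis"
begin

type_synonym site = "int \<times> int"

definition pdiff :: "site \<Rightarrow> site \<Rightarrow> site" where
  "pdiff j i = (fst j - fst i, snd j - snd i)"

definition padd :: "site \<Rightarrow> site \<Rightarrow> site" where
  "padd i j = (fst i + fst j, snd i + snd j)"

definition pneg :: "site \<Rightarrow> site" where
  "pneg k = (- fst k, - snd k)"

definition norm1 :: "site \<Rightarrow> int" where
  "norm1 k = \<bar>fst k\<bar> + \<bar>snd k\<bar>"

definition normInf :: "site \<Rightarrow> int" where
  "normInf k = max \<bar>fst k\<bar> \<bar>snd k\<bar>"

text \<open>Ordered pairs of distinct sites at sup-distance at most r meeting Lambda.
  Every unordered pair appears twice, hence the factor 1/2 in the Hamiltonian.\<close>
definition bonds :: "nat \<Rightarrow> site set \<Rightarrow> (site \<times> site) set" where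
  "bonds r \<Lambda> = {(i, j). i \<noteq> j \<and> normInf (pdiff j i) \<le> int r \<and> (i \<in> \<Lambda> \<or> j \<in> \<Lambda>)}"

definition hamiltonian :: "(site \<Rightarrow> real \<Rightarrow> real) \<Rightarrow> nat \<Rightarrow> site set \<Rightarrow> (site \<Rightarrow> real) \<Rightarrow> real" where
  "hamiltonian \<Psi> r \<Lambda> h = (1/2) * (\<Sum>(i, j)\<in>bonds r \<Lambda>. \<Psi> (pdiff j i) (h i - h j))"

definition ext_bc :: "site set \<Rightarrow> real \<Rightarrow> (site \<Rightarrow> real) \<Rightarrow> (site \<Rightarrow> real)" where
  "ext_bc \<Lambda> b h = (\<lambda>i. if i \<in> \<Lambda> then h i else b)"

definition gibbs_weight :: "(site \<Rightarrow> real \<Rightarrow> real) \<Rightarrow> nat \<Rightarrow> site set \<Rightarrow> real \<Rightarrow> (site \<Rightarrow> real) \<Rightarrow> real" where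
  "gibbs_weight \<Psi> r \<Lambda> b h = exp (- hamiltonian \<Psi> r \<Lambda> (ext_bc \<Lambda> b h))"

definition gibbs_exp :: "(site \<Rightarrow> real \<Rightarrow> real) \<Rightarrow> nat \<Rightarrow> site set \<Rightarrow> real \<Rightarrow> ((site \<Rightarrow> real) \<Rightarrow> real) \<Rightarrow> real" where
  "gibbs_exp \<Psi> r \<Lambda> b f =
     (\<integral>h. f (ext_bc \<Lambda> b h) * gibbs_weight \<Psi> r \<Lambda> b h \<partial>(PiM \<Lambda> (\<lambda>_. lborel)))
     / (\<integral>h. gibbs_weight \<Psi> r \<Lambda> b h \<partial>(PiM \<Lambda> (\<lambda>_. lborel)))"

definition gibbs_cond :: "(site \<Rightarrow> real \<Rightarrow> real) \<Rightarrow> nat \<Rightarrow> site set \<Rightarrow> real \<Rightarrow> ((site \<Rightarrow> real) \<Rightarrow> real) \<Rightarrow> (site \<Rightarrow> real) set \<Rightarrow> real" where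
  "gibbs_cond \<Psi> r \<Lambda> b f E =
     gibbs_exp \<Psi> r \<Lambda> b (\<lambda>h. f h * indicator E h) / gibbs_exp \<Psi> r \<Lambda> b (indicator E)"

definition admissible_potential :: "nat \<Rightarrow> (site \<Rightarrow> real \<Rightarrow> real) \<Rightarrow> bool" where
  "admissible_potential r \<Psi> \<longleftrightarrow>
     (\<forall>k. norm1 k > int r \<longrightarrow> (\<forall>x. \<Psi> k x = 0)) \<and>
     (\<forall>k x. \<Psi> k x = \<Psi> (pneg k) x) \<and>
     (\<forall>k x. \<Psi> k x = \<Psi> k (- x)) \<and>
     (\<forall>k x. \<Psi> k differentiable at x) \<and>
     (\<forall>k x. deriv (\<Psi> k) differentiable at x) \<and>
     (\<forall>k. continuous_on UNIV (deriv (deriv (\<Psi> k)))) \<and>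
     (\<forall>k x. deriv (deriv (\<Psi> k)) x \<ge> 0) \<and>
     (\<exists>c>0. let J = {j. \<forall>h. deriv (deriv (\<Psi> j)) h \<ge> c} in
        \<forall>x. ((0, 0), x) \<in> {(y, padd y j) | y j. j \<in> J}\<^sup>*)"

end

theory Submission
  imports Defs "HOL-Probability.Distributions"
begin

text \<open>Condition on the spins in \<open>A\<close>. By the spatial Markov property the conditional Gibbs measure is
  a mixture of Gibbs measures on \<open>B = \<Lambda> - A\<close> whose boundary conditions are bounded by \<open>a\<close>.
  For convex potentials these measures satisfy the Holley lattice condition, so by the
  Ahlswede--Daykin four functions theorem they are stochastically monotone in the boundary condition.
  Splitting \<open>h\<^sub>i\<^sup>2\<close> into the squares of its positive and negative parts, the first is dominated under
  the constant boundary condition \<open>a\<close> and the second under \<open>-a\<close>; translating the field by \<open>\<plusminus>a\<close>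
  reduces both to the zero boundary condition, and \<open>(t + a)\<^sup>2 \<le> 2a\<^sup>2 + 2t\<^sup>2\<close> gives the constant 4.
  Irreducibility of the strongly convex couplings yields a Poincare inequality, hence a Gaussian
  lower bound on the Hamiltonian, which makes all the integrals involved finite.\<close>

section \<open>The four functions theorem on a product of lines\<close>

abbreviation product_lborel :: "'i set \<Rightarrow> ('i \<Rightarrow> real) measure" where
  "product_lborel S \<equiv> PiM S (\<lambda>_. lborel)"

interpretation lborel_product: product_sigma_finite "\<lambda>_::'i. (lborel :: real measure)"
  by standard

lemma ennreal_add_le_add_of_mult_le:
  fixes x y u v :: ennreal
  assumes "x \<le> u" "y \<le> u" "x * y \<le> u * v"
  shows "x + y \<le> u + v"
proof (cases "u = \<infinity> \<or> v = \<infinity>")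
  case True
  then show ?thesis by auto
next
  case False
  then obtain u' v' where u: "u = ennreal u'" "u' \<ge> 0" and v: "v = ennreal v'" "v' \<ge> 0"
    by (cases u; cases v) auto
  obtain x' y' where x: "x = ennreal x'" "x' \<ge> 0" and y: "y = ennreal y'" "y' \<ge> 0"
    using assms(1,2) u by (cases x; cases y) (auto simp: top_unique)
  have bounds: "x' \<le> u'" "y' \<le> u'" using assms u x y by auto
  have product: "x' * y' \<le> u' * v'" using assms(3) u x y v
    by (simp add: ennreal_mult'[symmetric])
  have "x' + y' \<le> u' + v'"
  proof (cases "u' = 0")
    case True
    then show ?thesis using bounds x y v by auto
  next
    case False
    then have up: "u' > 0" using u by auto
    have "(u' - x') * (u' - y') \<ge> 0" using bounds by auto
    then have "u' * (x' + y') \<le> u' * (u' + v')" using product by (simp add: algebra_simps)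
    then show ?thesis using up by simp
  qed
  then show ?thesis using u v x y by (simp add: ennreal_plus[symmetric] del: ennreal_plus)
qed

lemma four_functions_pointwise:
  fixes a b c d :: "real \<Rightarrow> ennreal"
  assumes H: "\<And>s t. a s * b t \<le> c (max s t) * d (min s t)"
  shows "a s * b t + a t * b s \<le> c s * d t + c t * d s"
proof -
  have less: "a s * b t + a t * b s \<le> c t * d s + c s * d t" if "s < t" for s t
  proof (rule ennreal_add_le_add_of_mult_le)
    show "a s * b t \<le> c t * d s" "a t * b s \<le> c t * d s"
      using H[of s t] H[of t s] that by simp_all
    have "(a s * b t) * (a t * b s) = (a s * b s) * (a t * b t)" by (simp add: ac_simps)
    also have "\<dots> \<le> (c s * d s) * (c t * d t)"
      using H[of s s, simplified] H[of t t, simplified] by (rule mult_mono) auto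
    finally show "(a s * b t) * (a t * b s) \<le> (c t * d s) * (c s * d t)" by (simp add: ac_simps)
  qed
  consider "s < t" | "s = t" | "t < s" by linarith
  then show ?thesis
  proof cases
    case 1
    then show ?thesis using less by (simp add: ac_simps)
  next
    case 2
    then show ?thesis using H[of s s] by (simp add: add_mono)
  next
    case 3
    then show ?thesis using less[of t s] by (simp add: ac_simps)
  qed
qed

lemma four_functions_lborel:
  fixes a b c d :: "real \<Rightarrow> ennreal"
  assumes [measurable]: "a \<in> borel_measurable borel" "b \<in> borel_measurable borel"
    "c \<in> borel_measurable borel" "d \<in> borel_measurable borel"
  assumes H: "\<And>s t. a s * b t \<le> c (max s t) * d (min s t)"
  shows "integral\<^sup>N lborel a * integral\<^sup>N lborel b \<le> integral\<^sup>N lborel c * integral\<^sup>N lborel d"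
proof -
  have symmetrized: "2 * (integral\<^sup>N lborel f * integral\<^sup>N lborel g)
      = (\<integral>\<^sup>+s. \<integral>\<^sup>+t. f s * g t + f t * g s \<partial>lborel \<partial>lborel)"
    if [measurable]: "f \<in> borel_measurable borel" "g \<in> borel_measurable borel"
    for f g :: "real \<Rightarrow> ennreal"
  proof -
    have "(\<integral>\<^sup>+s. \<integral>\<^sup>+t. f s * g t + f t * g s \<partial>lborel \<partial>lborel)
        = (\<integral>\<^sup>+s. (\<integral>\<^sup>+t. f s * g t \<partial>lborel) + (\<integral>\<^sup>+t. f t * g s \<partial>lborel) \<partial>lborel)"
      by (intro nn_integral_cong nn_integral_add) auto
    also have "\<dots> = (\<integral>\<^sup>+s. \<integral>\<^sup>+t. f s * g t \<partial>lborel \<partial>lborel) + (\<integral>\<^sup>+s. \<integral>\<^sup>+t. f t * g s \<partial>lborel \<partial>lborel)"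
      by (rule nn_integral_add) auto
    also have "\<dots> = integral\<^sup>N lborel f * integral\<^sup>N lborel g + integral\<^sup>N lborel f * integral\<^sup>N lborel g"
      by (simp add: nn_integral_cmult nn_integral_multc mult.commute)
    finally show ?thesis by (simp add: mult_2)
  qed
  have "2 * (integral\<^sup>N lborel a * integral\<^sup>N lborel b) \<le> 2 * (integral\<^sup>N lborel c * integral\<^sup>N lborel d)"
    unfolding symmetrized[OF assms(1,2)] symmetrized[OF assms(3,4)]
    by (intro nn_integral_mono four_functions_pointwise H)
  then show ?thesis using ennreal_mult_le_mult_iff[of 2] by simp
qed

lemma measurable_nn_integral_fun_upd:
  assumes "f \<in> borel_measurable (product_lborel (insert k S))"
  shows "(\<lambda>x. \<integral>\<^sup>+s. f (x(k := s)) \<partial>lborel) \<in> borel_measurable (product_lborel S)"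
proof -
  have "(\<lambda>(x, s). f (x(k := s))) \<in> borel_measurable (product_lborel S \<Otimes>\<^sub>M lborel)"
    using measurable_comp[OF measurable_add_dim assms] by (simp add: comp_def case_prod_beta')
  then show ?thesis
    by (rule lborel.borel_measurable_nn_integral[where f="\<lambda>x s. f (x(k := s))", simplified])
qed

lemma measurable_fun_upd_slice:
  assumes "f \<in> borel_measurable (product_lborel (insert k S))"
    and "x \<in> space (product_lborel S)" "k \<notin> S"
  shows "(\<lambda>s. f (x(k := s))) \<in> borel_measurable borel"
  using measurable_comp[OF measurable_component_update assms(1), OF assms(2,3)]
  by (simp add: comp_def fun_upd_def)

lemma fun_upd_in_space_product_lborel:
  "x \<in> space (product_lborel S) \<Longrightarrow> x(k := s) \<in> space (product_lborel (insert k S))"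
  by (auto simp: space_PiM PiE_iff extensional_def)

lemma sup_inf_in_space_product_lborel:
  assumes "x \<in> space (product_lborel S)" "y \<in> space (product_lborel S)"
  shows "sup x y \<in> space (product_lborel S)" "inf x y \<in> space (product_lborel S)"
  using assms by (auto simp: space_PiM PiE_iff extensional_def)

text \<open>Induction on the number of coordinates: integrate out one coordinate and apply the
  one-dimensional inequality fibrewise.\<close>

theorem four_functions_product_lborel:
  fixes \<alpha> \<beta> \<gamma> \<delta> :: "('i \<Rightarrow> real) \<Rightarrow> ennreal"
  assumes "finite S"
    and "\<alpha> \<in> borel_measurable (product_lborel S)" "\<beta> \<in> borel_measurable (product_lborel S)"
        "\<gamma> \<in> borel_measurable (product_lborel S)" "\<delta> \<in> borel_measurable (product_lborel S)"
    and "\<And>x y. x \<in> space (product_lborel S) \<Longrightarrow> y \<in> space (product_lborel S) \<Longrightarrow>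
           \<alpha> x * \<beta> y \<le> \<gamma> (sup x y) * \<delta> (inf x y)"
  shows "integral\<^sup>N (product_lborel S) \<alpha> * integral\<^sup>N (product_lborel S) \<beta>
       \<le> integral\<^sup>N (product_lborel S) \<gamma> * integral\<^sup>N (product_lborel S) \<delta>"
  using assms
proof (induction S arbitrary: \<alpha> \<beta> \<gamma> \<delta> rule: finite_induct)
  case empty
  have "(\<lambda>_. undefined) \<in> space (product_lborel ({} :: 'i set))"
    by (simp add: PiM_empty)
  then show ?case
    using empty.prems(5) by (simp add: PiM_empty nn_integral_count_space_finite)
next
  case (insert k S)
  define m where "m f = (\<lambda>x. \<integral>\<^sup>+s. f (x(k := s)) \<partial>lborel)" for f :: "('i \<Rightarrow> real) \<Rightarrow> ennreal"
  have integral_insert: "integral\<^sup>N (product_lborel (insert k S)) f = integral\<^sup>N (product_lborel S) (m f)"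
    if "f \<in> borel_measurable (product_lborel (insert k S))" for f
    unfolding m_def by (rule lborel_product.product_nn_integral_insert) (use insert that in auto)
  have "integral\<^sup>N (product_lborel S) (m \<alpha>) * integral\<^sup>N (product_lborel S) (m \<beta>)
      \<le> integral\<^sup>N (product_lborel S) (m \<gamma>) * integral\<^sup>N (product_lborel S) (m \<delta>)"
  proof (rule insert.IH)
    fix x y assume x: "x \<in> space (product_lborel S)" and y: "y \<in> space (product_lborel S)"
    note sup_inf = sup_inf_in_space_product_lborel[OF x y]
    show "m \<alpha> x * m \<beta> y \<le> m \<gamma> (sup x y) * m \<delta> (inf x y)"
      unfolding m_def
    proof (rule four_functions_lborel)
      fix s t
      have "\<alpha> (x(k := s)) * \<beta> (y(k := t)) \<le> \<gamma> (sup (x(k := s)) (y(k := t))) * \<delta> (inf (x(k := s)) (y(k := t)))"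
        by (intro insert.prems(5) fun_upd_in_space_product_lborel x y)
      also have "sup (x(k := s)) (y(k := t)) = (sup x y)(k := max s t)"
        by (auto simp: fun_eq_iff sup_max)
      also have "inf (x(k := s)) (y(k := t)) = (inf x y)(k := min s t)"
        by (auto simp: fun_eq_iff inf_min)
      finally show "\<alpha> (x(k := s)) * \<beta> (y(k := t)) \<le> \<gamma> ((sup x y)(k := max s t)) * \<delta> ((inf x y)(k := min s t))" .
    qed (use insert x y sup_inf in \<open>auto intro: measurable_fun_upd_slice\<close>)
  qed (use insert.prems in \<open>auto simp: m_def intro: measurable_nn_integral_fun_upd\<close>)
  then show ?case using integral_insert insert.prems by simp
qed

lemma nn_integral_product_lborel_translate:
  fixes f :: "('i \<Rightarrow> real) \<Rightarrow> ennreal"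
  assumes "finite S" and "f \<in> borel_measurable (product_lborel S)"
  shows "(\<integral>\<^sup>+x. f (\<lambda>j\<in>S. x j + c) \<partial>product_lborel S) = integral\<^sup>N (product_lborel S) f"
  using assms
proof (induction S arbitrary: f rule: finite_induct)
  case empty
  then show ?case by (simp add: PiM_empty nn_integral_count_space_finite)
next
  case (insert k S)
  have translate_measurable: "(\<lambda>x. \<lambda>j\<in>T. x j + c) \<in> product_lborel T \<rightarrow>\<^sub>M product_lborel T" for T :: "'i set"
    by (rule measurable_restrict) (auto intro!: measurable_PiM_component_rev)
  have "(\<integral>\<^sup>+x. f (\<lambda>j\<in>insert k S. x j + c) \<partial>product_lborel (insert k S))
      = (\<integral>\<^sup>+x. \<integral>\<^sup>+s. f (\<lambda>j\<in>insert k S. (x(k := s)) j + c) \<partial>lborel \<partial>product_lborel S)"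
    using measurable_comp[OF translate_measurable insert.prems]
    by (intro lborel_product.product_nn_integral_insert) (use insert in \<open>auto simp: comp_def\<close>)
  also have "\<dots> = (\<integral>\<^sup>+x. \<integral>\<^sup>+s. f ((\<lambda>j\<in>S. x j + c)(k := c + 1 * s)) \<partial>lborel \<partial>product_lborel S)"
    \<comment> \<open>the shape expected by \<open>nn_integral_real_affine\<close>\<close>
    using insert by (intro nn_integral_cong arg_cong[where f=f]) (auto simp: fun_eq_iff)
  also have "\<dots> = (\<integral>\<^sup>+x. \<integral>\<^sup>+s. f ((\<lambda>j\<in>S. x j + c)(k := s)) \<partial>lborel \<partial>product_lborel S)"
  proof (rule nn_integral_cong)
    fix x assume "x \<in> space (product_lborel S)"
    then have "(\<lambda>j\<in>S. x j + c) \<in> space (product_lborel S)"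
      by (rule measurable_space[OF translate_measurable])
    then have slice: "(\<lambda>s. f ((\<lambda>j\<in>S. x j + c)(k := s))) \<in> borel_measurable borel"
      by (rule measurable_fun_upd_slice[OF insert.prems]) (use insert in auto)
    show "(\<integral>\<^sup>+s. f ((\<lambda>j\<in>S. x j + c)(k := c + 1 * s)) \<partial>lborel) = (\<integral>\<^sup>+s. f ((\<lambda>j\<in>S. x j + c)(k := s)) \<partial>lborel)"
      using nn_integral_real_affine[OF slice, of 1 c] by simp
  qed
  also have "\<dots> = (\<integral>\<^sup>+x. \<integral>\<^sup>+s. f (x(k := s)) \<partial>lborel \<partial>product_lborel S)"
    using insert.IH[OF measurable_nn_integral_fun_upd[OF insert.prems]] by (simp only:)
  also have "\<dots> = integral\<^sup>N (product_lborel (insert k S)) f"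
    by (rule lborel_product.product_nn_integral_insert[symmetric]) (use insert in auto)
  finally show ?case .
qed

section \<open>Convex potentials\<close>

lemma convex_on_UNIV_of_deriv2_nonneg:
  fixes f :: "real \<Rightarrow> real"
  assumes "\<And>x. f differentiable at x" "\<And>x. deriv f differentiable at x"
    and "\<And>x. deriv (deriv f) x \<ge> 0"
  shows "convex_on UNIV f"
  using assms by (intro f''_ge0_imp_convex[where f'="deriv f" and f''="deriv (deriv f)"])
    (auto simp: DERIV_deriv_iff_real_differentiable)

lemma deriv_zero_of_even:
  fixes f :: "real \<Rightarrow> real"
  assumes "\<And>x. f differentiable at x" and even: "\<And>x. f (- x) = f x"
  shows "deriv f 0 = 0"
proof -
  have D: "DERIV f 0 :> deriv f 0"
    using assms(1) DERIV_deriv_iff_real_differentiable by blast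
  have "DERIV (\<lambda>x. f (- x)) 0 :> - deriv f 0"
    using DERIV_mirror[of f "deriv f 0" 0] D by simp
  then have "DERIV f 0 :> - deriv f 0" using even by simp
  with D have "deriv f 0 = - deriv f 0" by (rule DERIV_unique)
  then show ?thesis by simp
qed

lemma even_ge_quadratic_of_deriv2_ge:
  fixes f :: "real \<Rightarrow> real"
  assumes "\<And>x. f differentiable at x" "\<And>x. deriv f differentiable at x"
    and "\<And>x. deriv (deriv f) x \<ge> c" and "\<And>x. f (- x) = f x"
  shows "f 0 + c / 2 * t\<^sup>2 \<le> f t"
proof -
  have "\<forall>m s. m < 2 \<and> \<bar>s\<bar> \<le> \<bar>t\<bar> \<longrightarrow> DERIV ((deriv ^^ m) f) s :> (deriv ^^ Suc m) f s"
    using assms(1,2) by (auto simp: less_2_cases_iff DERIV_deriv_iff_real_differentiable)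
  then obtain s where "f t = f 0 + deriv f 0 * t + deriv (deriv f) s / 2 * t\<^sup>2"
    using Maclaurin_bi_le[of "\<lambda>m. (deriv ^^ m) f" f 2 t] by (auto simp: numeral_2_eq_2)
  moreover have "deriv f 0 = 0" by (rule deriv_zero_of_even[OF assms(1,4)])
  moreover have "c / 2 * t\<^sup>2 \<le> deriv (deriv f) s / 2 * t\<^sup>2"
    using assms(3)[of s] by (intro mult_right_mono divide_right_mono) auto
  ultimately show ?thesis by simp
qed

lemma borel_measurable_convex_on_UNIV:
  fixes f :: "real \<Rightarrow> real"
  assumes "convex_on UNIV f"
  shows "f \<in> borel_measurable borel"
  using convex_on_continuous[OF open_UNIV assms] by (rule borel_measurable_continuous_onI)

lemma convex_on_sum_le_outer:
  fixes f :: "real \<Rightarrow> real"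
  assumes "convex_on UNIV f" and "p \<le> q" "q \<le> s" "p + s = q + r"
  shows "f q + f r \<le> f p + f s"
proof (cases "p = s")
  case True
  then show ?thesis using assms by auto
next
  case False
  then have ps: "p < s" using assms by simp
  define t where "t = (q - p) / (s - p)"
  have t: "0 \<le> t" "t \<le> 1" using assms ps unfolding t_def by (auto simp: field_simps)
  have "t * (s - p) = q - p" using ps unfolding t_def by simp
  then have q: "q = (1 - t) *\<^sub>R p + t *\<^sub>R s" and r: "r = t *\<^sub>R p + (1 - t) *\<^sub>R s"
    using assms(4) by (simp_all add: algebra_simps)
  have "f q \<le> (1 - t) * f p + t * f s"
    unfolding q using convex_onD[OF assms(1) t] by simp
  moreover have "f r \<le> t * f p + (1 - t) * f s"
    unfolding r using convex_onD[OF assms(1), of "1 - t" p s] t by simp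
  ultimately show ?thesis by (simp add: algebra_simps)
qed

lemma convex_on_min_max_diff:
  fixes f :: "real \<Rightarrow> real"
  assumes "convex_on UNIV f"
  shows "f (min s1 s2 - min t1 t2) + f (max s1 s2 - max t1 t2) \<le> f (s1 - t1) + f (s2 - t2)"
proof -
  have crossed: "f (s1 - t2) + f (s2 - t1) \<le> f (s1 - t1) + f (s2 - t2)"
    if "s1 \<le> s2" "t2 \<le> t1" for s1 s2 t1 t2 :: real
    using convex_on_sum_le_outer[OF assms, of "s1 - t1" "s1 - t2" "s2 - t2" "s2 - t1"] that by simp
  consider "s1 \<le> s2" "t1 \<le> t2" | "s1 \<le> s2" "t2 \<le> t1" | "s2 \<le> s1" "t1 \<le> t2" | "s2 \<le> s1" "t2 \<le> t1"
    by linarith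
  then show ?thesis
  proof cases
    case 1
    then show ?thesis by simp
  next
    case 2
    then show ?thesis using crossed[of s1 s2 t2 t1] by (simp add: min_def max_def)
  next
    case 3
    then show ?thesis using crossed[of s2 s1 t1 t2] by (simp add: min_def max_def add.commute)
  next
    case 4
    then show ?thesis by (simp add: min_def max_def add.commute)
  qed
qed

section \<open>Hamiltonians and Boltzmann weights\<close>

definition ext_bc_fun :: "site set \<Rightarrow> (site \<Rightarrow> real) \<Rightarrow> (site \<Rightarrow> real) \<Rightarrow> (site \<Rightarrow> real)" where
  "ext_bc_fun B G x = (\<lambda>j. if j \<in> B then x j else G j)"

lemma ext_bc_eq_ext_bc_fun: "ext_bc B b x = ext_bc_fun B (\<lambda>_. b) x"
  by (simp add: ext_bc_def ext_bc_fun_def)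

lemma ext_bc_fun_inf:
  "G1 \<le> G2 \<Longrightarrow> inf (ext_bc_fun B G1 x) (ext_bc_fun B G2 y) = ext_bc_fun B G1 (inf x y)"
  by (auto simp: ext_bc_fun_def fun_eq_iff le_fun_def inf_min min_def)

lemma ext_bc_fun_sup:
  "G1 \<le> G2 \<Longrightarrow> sup (ext_bc_fun B G1 x) (ext_bc_fun B G2 y) = ext_bc_fun B G2 (sup x y)"
  by (auto simp: ext_bc_fun_def fun_eq_iff le_fun_def sup_max max_def)

lemma ext_bc_fun_merge:
  assumes "A \<inter> B = {}" "\<Lambda> = A \<union> B"
  shows "ext_bc_fun \<Lambda> (\<lambda>_. 0) (merge A B (g, \<phi>)) = ext_bc_fun B (ext_bc A 0 g) \<phi>"
  using assms by (auto simp: ext_bc_def ext_bc_fun_def merge_def fun_eq_iff)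

lemma normInf_pdiff_commute: "normInf (pdiff i j) = normInf (pdiff j i)"
  by (simp add: normInf_def pdiff_def abs_minus_commute max.commute)

lemma finite_normInf_le: "finite {k :: site. normInf k \<le> int r}"
proof (rule finite_subset)
  show "{k :: site. normInf k \<le> int r} \<subseteq> {- int r..int r} \<times> {- int r..int r}"
    by (auto simp: normInf_def)
qed auto

lemma finite_bonds:
  assumes "finite \<Lambda>"
  shows "finite (bonds r \<Lambda>)"
proof (rule finite_subset)
  let ?N = "(\<lambda>(i, k). padd i k) ` (\<Lambda> \<times> {k. normInf k \<le> int r})"
  have shifted: "padd x k \<in> ?N" if "x \<in> \<Lambda>" "normInf k \<le> int r" for x k
    using that by auto
  have "i \<in> ?N \<and> j \<in> ?N" if "normInf (pdiff j i) \<le> int r" "i \<in> \<Lambda> \<or> j \<in> \<Lambda>" for i j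
  proof -
    have "padd i (pdiff j i) = j" "padd j (pdiff i j) = i" "padd i (0, 0) = i" "padd j (0, 0) = j"
      by (simp_all add: padd_def pdiff_def)
    moreover have "normInf (0, 0) \<le> int r" "normInf (pdiff i j) \<le> int r"
      using that(1) normInf_pdiff_commute[of i j] by (simp_all add: normInf_def)
    ultimately show ?thesis
      using that shifted by metis
  qed
  then show "bonds r \<Lambda> \<subseteq> ?N \<times> ?N" by (auto simp: bonds_def)
  show "finite (?N \<times> ?N)" using assms finite_normInf_le by auto
qed

lemma hamiltonian_inf_sup_le:
  assumes "\<And>k. convex_on UNIV (\<Psi> k)"
  shows "hamiltonian \<Psi> r B (inf X Y) + hamiltonian \<Psi> r B (sup X Y)
       \<le> hamiltonian \<Psi> r B X + hamiltonian \<Psi> r B Y"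
proof -
  have "(\<Sum>(i, j)\<in>bonds r B. \<Psi> (pdiff j i) (inf X Y i - inf X Y j) + \<Psi> (pdiff j i) (sup X Y i - sup X Y j))
      \<le> (\<Sum>(i, j)\<in>bonds r B. \<Psi> (pdiff j i) (X i - X j) + \<Psi> (pdiff j i) (Y i - Y j))"
    by (rule sum_mono) (auto simp: inf_min sup_max intro: convex_on_min_max_diff[OF assms])
  then show ?thesis
    unfolding hamiltonian_def by (simp add: sum.distrib case_prod_beta')
qed

lemma hamiltonian_add_const: "hamiltonian \<Psi> r B (\<lambda>j. X j + c) = hamiltonian \<Psi> r B X"
  unfolding hamiltonian_def by simp

text \<open>Only bonds meeting \<open>B\<close> depend on the values inside \<open>B\<close>.\<close>

lemma hamiltonian_diff_cong:
  assumes "finite \<Lambda>" "B \<subseteq> \<Lambda>" "\<And>j. j \<notin> B \<Longrightarrow> X j = Y j"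
  shows "hamiltonian \<Psi> r \<Lambda> X - hamiltonian \<Psi> r B X = hamiltonian \<Psi> r \<Lambda> Y - hamiltonian \<Psi> r B Y"
proof -
  have sub: "bonds r B \<subseteq> bonds r \<Lambda>" using assms(2) by (auto simp: bonds_def)
  have diff: "hamiltonian \<Psi> r \<Lambda> Z - hamiltonian \<Psi> r B Z
      = (1/2) * (\<Sum>(i, j)\<in>bonds r \<Lambda> - bonds r B. \<Psi> (pdiff j i) (Z i - Z j))" for Z
    unfolding hamiltonian_def sum.subset_diff[OF sub finite_bonds[OF assms(1)]]
    by (simp add: algebra_simps)
  have "i \<notin> B \<and> j \<notin> B" if "(i, j) \<in> bonds r \<Lambda> - bonds r B" for i j
    using that unfolding bonds_def by blast
  then show ?thesis
    unfolding diff using assms(3) by (intro arg_cong[where f="(*) (1/2)"] sum.cong) auto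
qed

lemma borel_measurable_hamiltonian_ext_bc_fun:
  assumes "\<And>k. \<Psi> k \<in> borel_measurable borel"
  shows "(\<lambda>x. hamiltonian \<Psi> r \<Lambda> (ext_bc_fun B G x)) \<in> borel_measurable (product_lborel B)"
proof -
  have "(\<lambda>x. ext_bc_fun B G x u) \<in> borel_measurable (product_lborel B)" for u
    by (cases "u \<in> B") (auto simp: ext_bc_fun_def)
  then have "(\<lambda>x. \<Psi> k (ext_bc_fun B G x u - ext_bc_fun B G x v)) \<in> borel_measurable (product_lborel B)"
    for k u v
    using measurable_comp[OF borel_measurable_diff assms] by (simp add: comp_def) blast
  then show ?thesis
    unfolding hamiltonian_def by (auto simp: case_prod_beta')
qed

definition boltzmann ::
    "(site \<Rightarrow> real \<Rightarrow> real) \<Rightarrow> nat \<Rightarrow> site set \<Rightarrow> (site \<Rightarrow> real) \<Rightarrow> (site \<Rightarrow> real) \<Rightarrow> ennreal" where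
  "boltzmann \<Psi> r B G x = ennreal (exp (- hamiltonian \<Psi> r B (ext_bc_fun B G x)))"

lemma boltzmann_const: "boltzmann \<Psi> r B (\<lambda>_. b) x = ennreal (gibbs_weight \<Psi> r B b x)"
  by (simp add: boltzmann_def gibbs_weight_def ext_bc_eq_ext_bc_fun)

lemma borel_measurable_boltzmann:
  assumes "\<And>k. \<Psi> k \<in> borel_measurable borel"
  shows "boltzmann \<Psi> r B G \<in> borel_measurable (product_lborel B)"
proof -
  have "(\<lambda>x. hamiltonian \<Psi> r B (ext_bc_fun B G x)) \<in> borel_measurable (product_lborel B)"
    by (rule borel_measurable_hamiltonian_ext_bc_fun[OF assms])
  then show ?thesis
    unfolding boltzmann_def by measurable
qed

lemma boltzmann_inf_sup:
  assumes "\<And>k. convex_on UNIV (\<Psi> k)" and "G1 \<le> G2"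
  shows "boltzmann \<Psi> r B G1 x * boltzmann \<Psi> r B G2 y
       \<le> boltzmann \<Psi> r B G1 (inf x y) * boltzmann \<Psi> r B G2 (sup x y)"
proof -
  have "hamiltonian \<Psi> r B (inf (ext_bc_fun B G1 x) (ext_bc_fun B G2 y))
      + hamiltonian \<Psi> r B (sup (ext_bc_fun B G1 x) (ext_bc_fun B G2 y))
      \<le> hamiltonian \<Psi> r B (ext_bc_fun B G1 x) + hamiltonian \<Psi> r B (ext_bc_fun B G2 y)"
    by (rule hamiltonian_inf_sup_le[OF assms(1)])
  then have "hamiltonian \<Psi> r B (ext_bc_fun B G1 (inf x y)) + hamiltonian \<Psi> r B (ext_bc_fun B G2 (sup x y))
      \<le> hamiltonian \<Psi> r B (ext_bc_fun B G1 x) + hamiltonian \<Psi> r B (ext_bc_fun B G2 y)"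
    by (simp only: ext_bc_fun_inf[OF assms(2)] ext_bc_fun_sup[OF assms(2)])
  then show ?thesis
    unfolding boltzmann_def by (simp add: ennreal_mult''[symmetric] exp_add[symmetric] del: ennreal_mult'')
qed

lemma boltzmann_const_translate:
  "boltzmann \<Psi> r B (\<lambda>_. c) (\<lambda>j\<in>B. x j + c) = boltzmann \<Psi> r B (\<lambda>_. 0) x"
proof -
  have "ext_bc_fun B (\<lambda>_. c) (\<lambda>j\<in>B. x j + c) = (\<lambda>j. ext_bc_fun B (\<lambda>_. 0) x j + c)"
    by (auto simp: ext_bc_fun_def)
  then show ?thesis unfolding boltzmann_def by (simp add: hamiltonian_add_const)
qed

lemma boltzmann_merge:
  assumes "finite \<Lambda>" "A \<inter> B = {}" "\<Lambda> = A \<union> B"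
  shows "boltzmann \<Psi> r \<Lambda> (\<lambda>_. 0) (merge A B (g, \<phi>))
       = ennreal (exp (hamiltonian \<Psi> r B (ext_bc A 0 g) - hamiltonian \<Psi> r \<Lambda> (ext_bc A 0 g)))
         * boltzmann \<Psi> r B (ext_bc A 0 g) \<phi>"
proof -
  let ?X = "ext_bc_fun B (ext_bc A 0 g) \<phi>"
  have "hamiltonian \<Psi> r \<Lambda> ?X - hamiltonian \<Psi> r B ?X
      = hamiltonian \<Psi> r \<Lambda> (ext_bc A 0 g) - hamiltonian \<Psi> r B (ext_bc A 0 g)"
    using assms by (intro hamiltonian_diff_cong) (auto simp: ext_bc_fun_def)
  then show ?thesis
    unfolding boltzmann_def ext_bc_fun_merge[OF assms(2,3)]
    by (simp add: ennreal_mult''[symmetric] exp_add[symmetric] del: ennreal_mult'')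
qed

section \<open>Holley's inequality and the second moment\<close>

text \<open>Holley's inequality: raising the boundary condition increases the expectation of every
  increasing observable.\<close>

lemma holley_inequality_mono:
  fixes F :: "(site \<Rightarrow> real) \<Rightarrow> ennreal"
  assumes "finite B" and convex: "\<And>k. convex_on UNIV (\<Psi> k)" and "G1 \<le> G2"
    and F: "F \<in> borel_measurable (product_lborel B)" "mono F"
  shows "(\<integral>\<^sup>+x. F x * boltzmann \<Psi> r B G1 x \<partial>product_lborel B) * integral\<^sup>N (product_lborel B) (boltzmann \<Psi> r B G2)
       \<le> (\<integral>\<^sup>+x. F x * boltzmann \<Psi> r B G2 x \<partial>product_lborel B) * integral\<^sup>N (product_lborel B) (boltzmann \<Psi> r B G1)"
proof (rule four_functions_product_lborel[OF assms(1)])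
  fix x y
  have "F x * (boltzmann \<Psi> r B G1 x * boltzmann \<Psi> r B G2 y)
      \<le> F (sup x y) * (boltzmann \<Psi> r B G1 (inf x y) * boltzmann \<Psi> r B G2 (sup x y))"
    by (intro mult_mono monoD[OF F(2)] boltzmann_inf_sup convex assms(3)) auto
  then show "F x * boltzmann \<Psi> r B G1 x * boltzmann \<Psi> r B G2 y
      \<le> F (sup x y) * boltzmann \<Psi> r B G2 (sup x y) * boltzmann \<Psi> r B G1 (inf x y)"
    by (simp add: mult_ac)
qed (intro borel_measurable_times_ennreal borel_measurable_boltzmann borel_measurable_convex_on_UNIV convex F(1))+

lemma holley_inequality_antimono:
  fixes F :: "(site \<Rightarrow> real) \<Rightarrow> ennreal"
  assumes "finite B" and convex: "\<And>k. convex_on UNIV (\<Psi> k)" and "G1 \<le> G2"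
    and F: "F \<in> borel_measurable (product_lborel B)" "antimono F"
  shows "integral\<^sup>N (product_lborel B) (boltzmann \<Psi> r B G1) * (\<integral>\<^sup>+x. F x * boltzmann \<Psi> r B G2 x \<partial>product_lborel B)
       \<le> integral\<^sup>N (product_lborel B) (boltzmann \<Psi> r B G2) * (\<integral>\<^sup>+x. F x * boltzmann \<Psi> r B G1 x \<partial>product_lborel B)"
proof (rule four_functions_product_lborel[OF assms(1)])
  fix x y
  have "F y * (boltzmann \<Psi> r B G1 x * boltzmann \<Psi> r B G2 y)
      \<le> F (inf x y) * (boltzmann \<Psi> r B G1 (inf x y) * boltzmann \<Psi> r B G2 (sup x y))"
    by (intro mult_mono antimonoD[OF F(2)] boltzmann_inf_sup convex assms(3)) auto
  then show "boltzmann \<Psi> r B G1 x * (F y * boltzmann \<Psi> r B G2 y)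
      \<le> boltzmann \<Psi> r B G2 (sup x y) * (F (inf x y) * boltzmann \<Psi> r B G1 (inf x y))"
    by (simp add: mult_ac)
qed (intro borel_measurable_times_ennreal borel_measurable_boltzmann borel_measurable_convex_on_UNIV convex F(1))+

lemma nn_integral_boltzmann_const_translate:
  fixes F :: "(site \<Rightarrow> real) \<Rightarrow> ennreal"
  assumes "finite B" "\<And>k. \<Psi> k \<in> borel_measurable borel" "F \<in> borel_measurable (product_lborel B)"
  shows "(\<integral>\<^sup>+x. F x * boltzmann \<Psi> r B (\<lambda>_. c) x \<partial>product_lborel B)
       = (\<integral>\<^sup>+y. F (\<lambda>j\<in>B. y j + c) * boltzmann \<Psi> r B (\<lambda>_. 0) y \<partial>product_lborel B)"
proof -
  have "(\<lambda>x. F x * boltzmann \<Psi> r B (\<lambda>_. c) x) \<in> borel_measurable (product_lborel B)"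
    using assms(3) borel_measurable_boltzmann[OF assms(2)] by measurable
  from nn_integral_product_lborel_translate[OF assms(1) this, of c] show ?thesis
    by (simp add: boltzmann_const_translate)
qed

lemma boltzmann_const_second_moment_le:
  assumes "finite B" "i \<in> B" "\<And>k. \<Psi> k \<in> borel_measurable borel"
  shows "(\<integral>\<^sup>+x. ennreal ((x i)\<^sup>2) * boltzmann \<Psi> r B (\<lambda>_. c) x \<partial>product_lborel B)
       \<le> ennreal (2 * c\<^sup>2) * integral\<^sup>N (product_lborel B) (boltzmann \<Psi> r B (\<lambda>_. 0))
         + 2 * (\<integral>\<^sup>+x. ennreal ((x i)\<^sup>2) * boltzmann \<Psi> r B (\<lambda>_. 0) x \<partial>product_lborel B)"
proof -
  have [measurable]: "boltzmann \<Psi> r B (\<lambda>_. 0) \<in> borel_measurable (product_lborel B)"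
    by (rule borel_measurable_boltzmann[OF assms(3)])
  have [measurable]: "(\<lambda>x. x i) \<in> borel_measurable (product_lborel B)"
    using assms(2) by measurable
  have square: "ennreal ((t + c)\<^sup>2) \<le> ennreal (2 * c\<^sup>2) + 2 * ennreal (t\<^sup>2)" for t :: real
  proof -
    have "(t + c)\<^sup>2 \<le> 2 * c\<^sup>2 + 2 * t\<^sup>2"
      using sum_squares_ge_zero[of "t - c" 0] by (simp add: power2_eq_square algebra_simps)
    then have "ennreal ((t + c)\<^sup>2) \<le> ennreal (2 * c\<^sup>2 + 2 * t\<^sup>2)"
      by (rule ennreal_leI)
    also have "\<dots> = ennreal (2 * c\<^sup>2) + 2 * ennreal (t\<^sup>2)"
      by (simp add: ennreal_plus ennreal_mult)
    finally show ?thesis .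
  qed
  have "(\<integral>\<^sup>+x. ennreal ((x i)\<^sup>2) * boltzmann \<Psi> r B (\<lambda>_. c) x \<partial>product_lborel B)
      = (\<integral>\<^sup>+y. ennreal ((y i + c)\<^sup>2) * boltzmann \<Psi> r B (\<lambda>_. 0) y \<partial>product_lborel B)"
    using assms by (subst nn_integral_boltzmann_const_translate) auto
  also have "\<dots> \<le> (\<integral>\<^sup>+y. ennreal (2 * c\<^sup>2) * boltzmann \<Psi> r B (\<lambda>_. 0) y
      + 2 * (ennreal ((y i)\<^sup>2) * boltzmann \<Psi> r B (\<lambda>_. 0) y) \<partial>product_lborel B)"
    by (intro nn_integral_mono order_trans[OF mult_right_mono[OF square]]) (auto simp: distrib_right mult.assoc)
  also have "\<dots> = ennreal (2 * c\<^sup>2) * integral\<^sup>N (product_lborel B) (boltzmann \<Psi> r B (\<lambda>_. 0))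
      + 2 * (\<integral>\<^sup>+x. ennreal ((x i)\<^sup>2) * boltzmann \<Psi> r B (\<lambda>_. 0) x \<partial>product_lborel B)"
    by (simp add: nn_integral_add nn_integral_cmult)
  finally show ?thesis .
qed

lemma nn_integral_boltzmann_const:
  assumes "finite B" "\<And>k. \<Psi> k \<in> borel_measurable borel"
  shows "integral\<^sup>N (product_lborel B) (boltzmann \<Psi> r B (\<lambda>_. c))
       = integral\<^sup>N (product_lborel B) (boltzmann \<Psi> r B (\<lambda>_. 0))"
  using nn_integral_boltzmann_const_translate[OF assms, where F="\<lambda>_. 1" and r=r and c=c] by simp

lemma boltzmann_positive_part_moment_le:
  assumes "finite B" "i \<in> B" and convex: "\<And>k. convex_on UNIV (\<Psi> k)" and "G \<le> (\<lambda>_. a)"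
  shows "integral\<^sup>N (product_lborel B) (boltzmann \<Psi> r B (\<lambda>_. 0))
         * (\<integral>\<^sup>+x. ennreal ((max (x i) 0)\<^sup>2) * boltzmann \<Psi> r B G x \<partial>product_lborel B)
       \<le> (ennreal (2 * a\<^sup>2) * integral\<^sup>N (product_lborel B) (boltzmann \<Psi> r B (\<lambda>_. 0))
          + 2 * (\<integral>\<^sup>+x. ennreal ((x i)\<^sup>2) * boltzmann \<Psi> r B (\<lambda>_. 0) x \<partial>product_lborel B))
         * integral\<^sup>N (product_lborel B) (boltzmann \<Psi> r B G)"
proof -
  let ?Z = "\<lambda>G. integral\<^sup>N (product_lborel B) (boltzmann \<Psi> r B G)"
  define P where "P x = ennreal ((max (x i) 0)\<^sup>2)" for x :: "site \<Rightarrow> real"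
  note measurable_\<Psi> = borel_measurable_convex_on_UNIV[OF convex]
  have [measurable]: "(\<lambda>x. x i) \<in> borel_measurable (product_lborel B)"
    "boltzmann \<Psi> r B G' \<in> borel_measurable (product_lborel B)" for G'
    using assms(2) borel_measurable_boltzmann[OF measurable_\<Psi>] by measurable
  have "mono P"
  proof (rule monoI)
    fix x y :: "site \<Rightarrow> real"
    assume "x \<le> y"
    then have "x i \<le> y i" by (rule le_funD)
    then show "P x \<le> P y" unfolding P_def by (intro ennreal_leI power_mono) auto
  qed
  have "?Z (\<lambda>_. 0) * (\<integral>\<^sup>+x. P x * boltzmann \<Psi> r B G x \<partial>product_lborel B)
      = (\<integral>\<^sup>+x. P x * boltzmann \<Psi> r B G x \<partial>product_lborel B) * ?Z (\<lambda>_. a)"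
    using nn_integral_boltzmann_const[where \<Psi>=\<Psi> and r=r and c=a, OF assms(1) measurable_\<Psi>]
    by (simp add: mult.commute)
  also have "\<dots> \<le> (\<integral>\<^sup>+x. P x * boltzmann \<Psi> r B (\<lambda>_. a) x \<partial>product_lborel B) * ?Z G"
    by (intro holley_inequality_mono assms(1) convex assms(4) \<open>mono P\<close>) (simp add: P_def)
  also have "\<dots> \<le> (\<integral>\<^sup>+x. ennreal ((x i)\<^sup>2) * boltzmann \<Psi> r B (\<lambda>_. a) x \<partial>product_lborel B) * ?Z G"
    unfolding P_def by (intro mult_right_mono nn_integral_mono) (auto intro!: ennreal_leI simp: max_def)
  also have "\<dots> \<le> (ennreal (2 * a\<^sup>2) * ?Z (\<lambda>_. 0)
      + 2 * (\<integral>\<^sup>+x. ennreal ((x i)\<^sup>2) * boltzmann \<Psi> r B (\<lambda>_. 0) x \<partial>product_lborel B)) * ?Z G"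
    by (intro mult_right_mono boltzmann_const_second_moment_le assms(1,2) measurable_\<Psi>) auto
  finally show ?thesis unfolding P_def .
qed

lemma boltzmann_negative_part_moment_le:
  assumes "finite B" "i \<in> B" and convex: "\<And>k. convex_on UNIV (\<Psi> k)" and "(\<lambda>_. - a) \<le> G"
  shows "integral\<^sup>N (product_lborel B) (boltzmann \<Psi> r B (\<lambda>_. 0))
         * (\<integral>\<^sup>+x. ennreal ((max (- x i) 0)\<^sup>2) * boltzmann \<Psi> r B G x \<partial>product_lborel B)
       \<le> (ennreal (2 * a\<^sup>2) * integral\<^sup>N (product_lborel B) (boltzmann \<Psi> r B (\<lambda>_. 0))
          + 2 * (\<integral>\<^sup>+x. ennreal ((x i)\<^sup>2) * boltzmann \<Psi> r B (\<lambda>_. 0) x \<partial>product_lborel B))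
         * integral\<^sup>N (product_lborel B) (boltzmann \<Psi> r B G)"
proof -
  let ?Z = "\<lambda>G. integral\<^sup>N (product_lborel B) (boltzmann \<Psi> r B G)"
  define Q where "Q x = ennreal ((max (- x i) 0)\<^sup>2)" for x :: "site \<Rightarrow> real"
  note measurable_\<Psi> = borel_measurable_convex_on_UNIV[OF convex]
  have [measurable]: "(\<lambda>x. x i) \<in> borel_measurable (product_lborel B)"
    "boltzmann \<Psi> r B G' \<in> borel_measurable (product_lborel B)" for G'
    using assms(2) borel_measurable_boltzmann[OF measurable_\<Psi>] by measurable
  have "antimono Q"
  proof (rule antimonoI)
    fix x y :: "site \<Rightarrow> real"
    assume "x \<le> y"
    then have "x i \<le> y i" by (rule le_funD)
    then show "Q y \<le> Q x" unfolding Q_def by (intro ennreal_leI power_mono) auto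
  qed
  have "?Z (\<lambda>_. 0) * (\<integral>\<^sup>+x. Q x * boltzmann \<Psi> r B G x \<partial>product_lborel B)
      = ?Z (\<lambda>_. - a) * (\<integral>\<^sup>+x. Q x * boltzmann \<Psi> r B G x \<partial>product_lborel B)"
    using nn_integral_boltzmann_const[where \<Psi>=\<Psi> and r=r and c="- a", OF assms(1) measurable_\<Psi>]
    by simp
  also have "\<dots> \<le> ?Z G * (\<integral>\<^sup>+x. Q x * boltzmann \<Psi> r B (\<lambda>_. - a) x \<partial>product_lborel B)"
    by (intro holley_inequality_antimono assms(1) convex assms(4) \<open>antimono Q\<close>) (simp add: Q_def)
  also have "\<dots> \<le> ?Z G * (\<integral>\<^sup>+x. ennreal ((x i)\<^sup>2) * boltzmann \<Psi> r B (\<lambda>_. - a) x \<partial>product_lborel B)"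
    unfolding Q_def by (intro mult_left_mono nn_integral_mono) (auto intro!: ennreal_leI simp: max_def)
  also have "\<dots> \<le> ?Z G * (ennreal (2 * a\<^sup>2) * ?Z (\<lambda>_. 0)
      + 2 * (\<integral>\<^sup>+x. ennreal ((x i)\<^sup>2) * boltzmann \<Psi> r B (\<lambda>_. 0) x \<partial>product_lborel B))"
    using boltzmann_const_second_moment_le[OF assms(1,2) measurable_\<Psi>, where r=r and c="- a"]
    by (intro mult_left_mono) auto
  finally show ?thesis unfolding Q_def by (simp add: mult.commute)
qed

theorem boltzmann_second_moment_le:
  assumes "finite B" "i \<in> B" and convex: "\<And>k. convex_on UNIV (\<Psi> k)" and G: "\<And>j. \<bar>G j\<bar> \<le> a"
  shows "integral\<^sup>N (product_lborel B) (boltzmann \<Psi> r B (\<lambda>_. 0))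
         * (\<integral>\<^sup>+x. ennreal ((x i)\<^sup>2) * boltzmann \<Psi> r B G x \<partial>product_lborel B)
       \<le> (ennreal (4 * a\<^sup>2) * integral\<^sup>N (product_lborel B) (boltzmann \<Psi> r B (\<lambda>_. 0))
          + 4 * (\<integral>\<^sup>+x. ennreal ((x i)\<^sup>2) * boltzmann \<Psi> r B (\<lambda>_. 0) x \<partial>product_lborel B))
         * integral\<^sup>N (product_lborel B) (boltzmann \<Psi> r B G)"
proof -
  let ?Z = "\<lambda>G. integral\<^sup>N (product_lborel B) (boltzmann \<Psi> r B G)"
  let ?m = "\<lambda>f G. \<integral>\<^sup>+x. ennreal (f (x i)) * boltzmann \<Psi> r B G x \<partial>product_lborel B"
  define K where "K = ennreal (2 * a\<^sup>2) * ?Z (\<lambda>_. 0) + 2 * ?m (\<lambda>t. t\<^sup>2) (\<lambda>_. 0)"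
  have [measurable]: "(\<lambda>x. x i) \<in> borel_measurable (product_lborel B)"
    "boltzmann \<Psi> r B G \<in> borel_measurable (product_lborel B)"
    using assms(2) borel_measurable_boltzmann[OF borel_measurable_convex_on_UNIV[OF convex]]
    by measurable
  have "G \<le> (\<lambda>_. a)" "(\<lambda>_. - a) \<le> G"
    using G by (auto simp: le_fun_def abs_le_iff) (metis minus_le_iff)
  have "?m (\<lambda>t. t\<^sup>2) G = ?m (\<lambda>t. (max t 0)\<^sup>2) G + ?m (\<lambda>t. (max (- t) 0)\<^sup>2) G"
  proof -
    have pointwise: "ennreal ((x i)\<^sup>2) * boltzmann \<Psi> r B G x
        = ennreal ((max (x i) 0)\<^sup>2) * boltzmann \<Psi> r B G x + ennreal ((max (- x i) 0)\<^sup>2) * boltzmann \<Psi> r B G x"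
      for x
      by (simp add: distrib_right[symmetric] ennreal_plus[symmetric] max_def power2_eq_square del: ennreal_plus)
    have "?m (\<lambda>t. t\<^sup>2) G = (\<integral>\<^sup>+x. ennreal ((max (x i) 0)\<^sup>2) * boltzmann \<Psi> r B G x
        + ennreal ((max (- x i) 0)\<^sup>2) * boltzmann \<Psi> r B G x \<partial>product_lborel B)"
      by (intro nn_integral_cong pointwise)
    also have "\<dots> = ?m (\<lambda>t. (max t 0)\<^sup>2) G + ?m (\<lambda>t. (max (- t) 0)\<^sup>2) G"
      by (rule nn_integral_add) measurable
    finally show ?thesis .
  qed
  then have "?Z (\<lambda>_. 0) * ?m (\<lambda>t. t\<^sup>2) G
      = ?Z (\<lambda>_. 0) * ?m (\<lambda>t. (max t 0)\<^sup>2) G + ?Z (\<lambda>_. 0) * ?m (\<lambda>t. (max (- t) 0)\<^sup>2) G"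
    by (simp add: distrib_left)
  also have "\<dots> \<le> K * ?Z G + K * ?Z G"
    unfolding K_def
    by (intro add_mono boltzmann_positive_part_moment_le boltzmann_negative_part_moment_le assms(1,2) convex) fact+
  also have "\<dots> = (2 * K) * ?Z G"
    by (simp only: mult_2 distrib_right)
  also have "2 * K = ennreal (4 * a\<^sup>2) * ?Z (\<lambda>_. 0) + 4 * ?m (\<lambda>t. t\<^sup>2) (\<lambda>_. 0)"
    using ennreal_mult[of 2 "2 * a\<^sup>2"] unfolding K_def by (simp add: distrib_left mult.assoc)
  finally show ?thesis .
qed

section \<open>Coercivity and finiteness of the partition function\<close>

lemma nn_integral_exp_neg_square_finite:
  fixes \<kappa> :: real
  assumes "\<kappa> > 0"
  shows "(\<integral>\<^sup>+t. ennreal (exp (- \<kappa> * t\<^sup>2)) \<partial>lborel) < \<infinity>"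
proof -
  define \<sigma> where "\<sigma> = sqrt (1 / (2 * \<kappa>))"
  have \<sigma>: "\<sigma> > 0" "\<sigma>\<^sup>2 = 1 / (2 * \<kappa>)" using assms unfolding \<sigma>_def by simp_all
  define K where "K = sqrt (2 * pi * \<sigma>\<^sup>2)"
  have "K > 0" using \<sigma>(1) unfolding K_def by simp
  have gaussian: "exp (- \<kappa> * t\<^sup>2) = K * normal_density 0 \<sigma> t" for t
  proof -
    have "- (t - 0)\<^sup>2 / (2 * \<sigma>\<^sup>2) = - \<kappa> * t\<^sup>2" using assms by (simp add: \<sigma>(2) field_simps)
    then show ?thesis unfolding normal_density_def K_def using \<open>K > 0\<close> K_def \<sigma> assms by simp
  qed
  have "(\<integral>\<^sup>+t. ennreal (normal_density 0 \<sigma> t) \<partial>lborel) = ennreal 1"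
    using \<sigma> integrable_normal_density[OF \<sigma>(1)] integral_normal_density[OF \<sigma>(1)]
    by (subst nn_integral_eq_integral) auto
  then have "(\<integral>\<^sup>+t. ennreal (exp (- \<kappa> * t\<^sup>2)) \<partial>lborel) = ennreal K"
    unfolding gaussian using \<open>K > 0\<close> by (simp add: ennreal_mult' nn_integral_cmult)
  then show ?thesis by simp
qed

lemma nn_integral_exp_neg_sum_squares_finite:
  fixes \<kappa> :: real and B :: "'i set"
  assumes "\<kappa> > 0" and "finite B"
  shows "(\<integral>\<^sup>+x. ennreal (exp (- \<kappa> * (\<Sum>j\<in>B. (x j)\<^sup>2))) \<partial>product_lborel B) < \<infinity>"
proof -
  have "ennreal (exp (- \<kappa> * (\<Sum>j\<in>B. (x j)\<^sup>2))) = (\<Prod>j\<in>B. ennreal (exp (- \<kappa> * (x j)\<^sup>2)))" for x :: "'i \<Rightarrow> real"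
    using exp_sum[OF assms(2), of "\<lambda>j. - \<kappa> * (x j)\<^sup>2"]
    by (simp add: sum_distrib_left prod_ennreal)
  then have "(\<integral>\<^sup>+x. ennreal (exp (- \<kappa> * (\<Sum>j\<in>B. (x j)\<^sup>2))) \<partial>product_lborel B)
      = (\<integral>\<^sup>+x. (\<Prod>j\<in>B. ennreal (exp (- \<kappa> * (x j)\<^sup>2))) \<partial>product_lborel B)"
    by simp
  also have "\<dots> = (\<Prod>j\<in>B. (\<integral>\<^sup>+t. ennreal (exp (- \<kappa> * t\<^sup>2)) \<partial>lborel))"
    by (rule lborel_product.product_nn_integral_prod[OF assms(2)]) measurable
  also have "\<dots> < \<infinity>"
    using nn_integral_exp_neg_square_finite[OF assms(1)] by (simp add: power_less_top_ennreal)
  finally show ?thesis .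
qed

definition dirichlet_form :: "site set \<Rightarrow> site set \<Rightarrow> (site \<Rightarrow> real) \<Rightarrow> real" where
  "dirichlet_form B J X = (\<Sum>u\<in>B. \<Sum>j\<in>J. (X u - X (padd u j))\<^sup>2)"

lemma dirichlet_form_nonneg: "dirichlet_form B J X \<ge> 0"
  unfolding dirichlet_form_def by (intro sum_nonneg) auto

lemma square_diff_le_dirichlet_form:
  assumes "finite B" "finite J" "u \<in> B" "j \<in> J"
  shows "(X u - X (padd u j))\<^sup>2 \<le> dirichlet_form B J X"
proof -
  have "(X u - X (padd u j))\<^sup>2 \<le> (\<Sum>j\<in>J. (X u - X (padd u j))\<^sup>2)"
    by (rule member_le_sum) (use assms in auto)
  also have "\<dots> \<le> dirichlet_form B J X"
    unfolding dirichlet_form_def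
    by (rule member_le_sum[where f="\<lambda>u. \<Sum>j\<in>J. (X u - X (padd u j))\<^sup>2"]) (use assms in \<open>auto intro: sum_nonneg\<close>)
  finally show ?thesis .
qed

lemma dirichlet_form_Diff_zero:
  assumes "finite J"
  shows "dirichlet_form B (J - {(0, 0)}) X = dirichlet_form B J X"
  unfolding dirichlet_form_def
  by (intro sum.cong refl sum.mono_neutral_left) (use assms in \<open>auto simp: padd_def\<close>)

definition dirichlet_controlled :: "site set \<Rightarrow> site set \<Rightarrow> site \<Rightarrow> bool" where
  "dirichlet_controlled B J y \<longleftrightarrow>
     (\<exists>L. \<forall>X. (\<forall>v. v \<notin> B \<longrightarrow> X v = 0) \<longrightarrow> (X y)\<^sup>2 \<le> L * dirichlet_form B J X)"

lemma dirichlet_controlled_outside: "y \<notin> B \<Longrightarrow> dirichlet_controlled B J y"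
  unfolding dirichlet_controlled_def by (intro exI[of _ 0]) (auto simp del: split_paired_All)

lemma dirichlet_controlled_step:
  assumes "finite B" "finite J" "j \<in> J" and "dirichlet_controlled B J (padd y j)"
  shows "dirichlet_controlled B J y"
proof (cases "y \<in> B")
  case False
  then show ?thesis by (rule dirichlet_controlled_outside)
next
  case True
  obtain L where L: "\<And>X. \<forall>v. v \<notin> B \<longrightarrow> X v = 0 \<Longrightarrow> (X (padd y j))\<^sup>2 \<le> L * dirichlet_form B J X"
    using assms(4) unfolding dirichlet_controlled_def by blast
  have "(X y)\<^sup>2 \<le> (2 * L + 2) * dirichlet_form B J X" if "\<forall>v. v \<notin> B \<longrightarrow> X v = 0" for X
  proof -
    have "(X y)\<^sup>2 \<le> 2 * (X (padd y j))\<^sup>2 + 2 * (X y - X (padd y j))\<^sup>2"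
      using sum_squares_ge_zero[of "X y - 2 * X (padd y j)" 0] by (simp add: power2_eq_square algebra_simps)
    also have "\<dots> \<le> 2 * (L * dirichlet_form B J X) + 2 * dirichlet_form B J X"
      using L[OF that] square_diff_le_dirichlet_form[OF assms(1,2) True assms(3), of X] by linarith
    finally show ?thesis by (simp add: algebra_simps)
  qed
  then show ?thesis unfolding dirichlet_controlled_def by blast
qed

text \<open>Every site is joined by a \<open>J\<close>-path to a site outside \<open>B\<close>, where \<open>X\<close> vanishes, and each step of
  the path costs a bounded factor.\<close>

lemma dirichlet_controlled_all:
  assumes "finite B" "finite J"
    and generating: "\<And>x. ((0, 0), x) \<in> {(y, padd y j) | y j. j \<in> J}\<^sup>*"
  shows "dirichlet_controlled B J x"
proof -
  have propagate: "\<forall>x. dirichlet_controlled B J (padd x w) \<longrightarrow> dirichlet_controlled B J x"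
    if "((0, 0), w) \<in> {(y, padd y j) | y j. j \<in> J}\<^sup>*" for w
    using that
  proof (induction rule: rtrancl_induct)
    case base
    then show ?case by (simp add: padd_def)
  next
    case (step w w')
    obtain j where j: "j \<in> J" "w' = padd w j" using step.hyps(2) by blast
    show ?case
    proof (intro allI impI)
      fix x
      assume "dirichlet_controlled B J (padd x w')"
      then have "dirichlet_controlled B J (padd (padd x w) j)" using j by (simp add: padd_def add.assoc)
      then have "dirichlet_controlled B J (padd x w)" by (rule dirichlet_controlled_step[OF assms(1,2) j(1)])
      then show "dirichlet_controlled B J x" using step.IH by blast
    qed
  qed
  obtain y :: site where "y \<notin> B"
    using ex_new_if_finite[OF _ assms(1)] by (auto simp: finite_prod)
  moreover have "padd x (pdiff y x) = y" by (simp add: padd_def pdiff_def)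
  ultimately show ?thesis
    using propagate[OF generating[of "pdiff y x"]] dirichlet_controlled_outside by metis
qed

lemma sum_squares_le_dirichlet_form:
  assumes "finite B" "finite J"
    and generating: "\<And>x. ((0, 0), x) \<in> {(y, padd y j) | y j. j \<in> J}\<^sup>*"
  shows "\<exists>L>0. \<forall>X. (\<forall>v. v \<notin> B \<longrightarrow> X v = 0) \<longrightarrow> (\<Sum>y\<in>B. (X y)\<^sup>2) \<le> L * dirichlet_form B J X"
proof -
  obtain Lf where Lf: "\<And>y X. \<forall>v. v \<notin> B \<longrightarrow> X v = 0 \<Longrightarrow> (X y)\<^sup>2 \<le> Lf y * dirichlet_form B J X"
    using dirichlet_controlled_all[OF assms] unfolding dirichlet_controlled_def by metis
  define L where "L = 1 + (\<Sum>y\<in>B. \<bar>Lf y\<bar>)"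
  have "L > 0" unfolding L_def by (smt (verit) sum_nonneg abs_ge_zero)
  moreover have "(\<Sum>y\<in>B. (X y)\<^sup>2) \<le> L * dirichlet_form B J X" if "\<forall>v. v \<notin> B \<longrightarrow> X v = 0" for X
  proof -
    have "(\<Sum>y\<in>B. (X y)\<^sup>2) \<le> (\<Sum>y\<in>B. \<bar>Lf y\<bar> * dirichlet_form B J X)"
      using Lf[OF that] dirichlet_form_nonneg
      by (intro sum_mono) (smt (verit) abs_ge_self mult_right_mono)
    also have "\<dots> \<le> L * dirichlet_form B J X"
      unfolding L_def sum_distrib_right[symmetric] using dirichlet_form_nonneg
      by (intro mult_right_mono) auto
    finally show ?thesis .
  qed
  ultimately show ?thesis by blast
qed

lemma hamiltonian_ge_dirichlet_form:
  assumes "finite B" "finite J" and J: "\<And>j. j \<in> J \<Longrightarrow> j \<noteq> (0, 0) \<and> normInf j \<le> int r"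
    and min0: "\<And>k t. \<Psi> k 0 \<le> \<Psi> k t"
    and strong: "\<And>j t. j \<in> J \<Longrightarrow> \<Psi> j 0 + c / 2 * t\<^sup>2 \<le> \<Psi> j t"
  shows "hamiltonian \<Psi> r B (\<lambda>_. 0) + c / 4 * dirichlet_form B J X \<le> hamiltonian \<Psi> r B X"
proof -
  define F where "F = (\<lambda>(u, v). \<Psi> (pdiff v u) (X u - X v) - \<Psi> (pdiff v u) 0)"
  define edge where "edge = (\<lambda>(u :: site, j :: site). (u, padd u j))"
  have pdiff_padd: "pdiff (padd u j) u = j" for u j by (simp add: padd_def pdiff_def)
  have edges: "edge ` (B \<times> J) \<subseteq> bonds r B"
    using J by (auto simp: edge_def bonds_def padd_def pdiff_def prod_eq_iff)
  have "inj_on edge (B \<times> J)"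
    unfolding edge_def by (auto simp: inj_on_def padd_def prod_eq_iff)
  have "c / 2 * dirichlet_form B J X = (\<Sum>q\<in>B \<times> J. c / 2 * (X (fst q) - X (padd (fst q) (snd q)))\<^sup>2)"
    unfolding dirichlet_form_def sum_distrib_left sum.cartesian_product by (simp add: case_prod_beta')
  also have "\<dots> \<le> (\<Sum>q\<in>B \<times> J. F (edge q))"
  proof (rule sum_mono)
    fix q
    assume "q \<in> B \<times> J"
    then show "c / 2 * (X (fst q) - X (padd (fst q) (snd q)))\<^sup>2 \<le> F (edge q)"
      using strong[of "snd q" "X (fst q) - X (padd (fst q) (snd q))"]
      by (auto simp: F_def edge_def case_prod_beta' pdiff_padd)
  qed
  also have "\<dots> = (\<Sum>p\<in>edge ` (B \<times> J). F p)"
    by (rule sum.reindex[OF \<open>inj_on edge (B \<times> J)\<close>, symmetric, unfolded comp_def])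
  also have "\<dots> \<le> (\<Sum>p\<in>bonds r B. F p)"
  proof (rule sum_mono2[OF finite_bonds[OF assms(1)] edges])
    show "0 \<le> F p" for p
      using min0[of "pdiff (snd p) (fst p)"] unfolding F_def by (simp add: case_prod_beta')
  qed
  also have "\<dots> = 2 * (hamiltonian \<Psi> r B X - hamiltonian \<Psi> r B (\<lambda>_. 0))"
    unfolding hamiltonian_def F_def by (simp add: sum_subtractf case_prod_beta')
  finally show ?thesis by simp
qed

lemma admissible_potentialD:
  assumes "admissible_potential r \<Psi>"
  shows "\<Psi> k differentiable at x" "deriv (\<Psi> k) differentiable at x" "0 \<le> deriv (deriv (\<Psi> k)) x"
    and "\<Psi> k (- x) = \<Psi> k x" and "int r < norm1 k \<Longrightarrow> \<Psi> k x = 0"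
  using assms unfolding admissible_potential_def by metis+

lemma admissible_potential_convex:
  assumes "admissible_potential r \<Psi>"
  shows "convex_on UNIV (\<Psi> k)"
  by (intro convex_on_UNIV_of_deriv2_nonneg admissible_potentialD[OF assms])

lemma admissible_potential_ge_quadratic:
  assumes "admissible_potential r \<Psi>" and "\<And>h. c \<le> deriv (deriv (\<Psi> k)) h"
  shows "\<Psi> k 0 + c / 2 * t\<^sup>2 \<le> \<Psi> k t"
  by (intro even_ge_quadratic_of_deriv2_ge admissible_potentialD[OF assms(1)] assms(2))

lemma admissible_potential_normInf_le:
  assumes "admissible_potential r \<Psi>" and "c > 0" and "\<And>h. c \<le> deriv (deriv (\<Psi> j)) h"
  shows "normInf j \<le> int r"
proof (rule ccontr)
  assume "\<not> normInf j \<le> int r"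
  then have "norm1 j > int r" by (auto simp: normInf_def norm1_def)
  then have "\<Psi> j = (\<lambda>_. 0)" using admissible_potentialD(5)[OF assms(1)] by blast
  then show False using assms(2,3) by simp
qed

theorem hamiltonian_coercive:
  assumes adm: "admissible_potential r \<Psi>" and "finite B"
  shows "\<exists>\<kappa>>0. \<exists>K. \<forall>x. K + \<kappa> * (\<Sum>j\<in>B. (x j)\<^sup>2) \<le> hamiltonian \<Psi> r B (ext_bc B 0 x)"
proof -
  obtain c where "c > 0"
    and generating: "\<And>x. ((0, 0), x) \<in> {(y, padd y j) | y j. j \<in> {j. \<forall>h. c \<le> deriv (deriv (\<Psi> j)) h}}\<^sup>*"
    using adm unfolding admissible_potential_def Let_def by blast
  define J where "J = {j. \<forall>h. c \<le> deriv (deriv (\<Psi> j)) h}"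
  have "J \<subseteq> {j. normInf j \<le> int r}"
    using admissible_potential_normInf_le[OF adm \<open>c > 0\<close>] unfolding J_def by blast
  then have "finite J" using finite_normInf_le by (rule finite_subset)
  obtain L where "L > 0"
    and poincare: "\<And>X. \<forall>v. v \<notin> B \<longrightarrow> X v = 0 \<Longrightarrow> (\<Sum>y\<in>B. (X y)\<^sup>2) \<le> L * dirichlet_form B J X"
    using sum_squares_le_dirichlet_form[OF assms(2) \<open>finite J\<close>] generating unfolding J_def by blast
  have "hamiltonian \<Psi> r B (\<lambda>_. 0) + c / (4 * L) * (\<Sum>j\<in>B. (x j)\<^sup>2) \<le> hamiltonian \<Psi> r B (ext_bc B 0 x)" for x
  proof -
    let ?X = "ext_bc B 0 x"
    have "c / (4 * L) * (\<Sum>j\<in>B. (x j)\<^sup>2) = c / (4 * L) * (\<Sum>j\<in>B. (?X j)\<^sup>2)"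
      by (simp add: ext_bc_def)
    also have "\<dots> \<le> c / (4 * L) * (L * dirichlet_form B J ?X)"
      using \<open>c > 0\<close> \<open>L > 0\<close> by (intro mult_left_mono poincare) (auto simp: ext_bc_def)
    also have "\<dots> = c / 4 * dirichlet_form B (J - {(0, 0)}) ?X"
      using \<open>L > 0\<close> by (simp add: dirichlet_form_Diff_zero[OF \<open>finite J\<close>])
    also have "hamiltonian \<Psi> r B (\<lambda>_. 0) + \<dots> \<le> hamiltonian \<Psi> r B ?X"
    proof (rule hamiltonian_ge_dirichlet_form[OF assms(2)])
      show "finite (J - {(0, 0)})" using \<open>finite J\<close> by simp
      show "j \<noteq> (0, 0) \<and> normInf j \<le> int r" if "j \<in> J - {(0, 0)}" for j
        using that \<open>J \<subseteq> {j. normInf j \<le> int r}\<close> by auto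
      show "\<Psi> k 0 \<le> \<Psi> k t" for k t
        using admissible_potential_ge_quadratic[OF adm admissible_potentialD(3)[OF adm]] by simp
      show "\<Psi> j 0 + c / 2 * t\<^sup>2 \<le> \<Psi> j t" if "j \<in> J - {(0, 0)}" for j t
        using admissible_potential_ge_quadratic[OF adm] that unfolding J_def by blast
    qed
    finally show ?thesis by simp
  qed
  moreover have "c / (4 * L) > 0" using \<open>c > 0\<close> \<open>L > 0\<close> by simp
  ultimately show ?thesis by blast
qed

lemma mult_exp_neg_le:
  fixes s \<kappa> :: real
  assumes "\<kappa> > 0"
  shows "s * exp (- \<kappa> * s) \<le> 2 / \<kappa> * exp (- (\<kappa> / 2) * s)"
proof -
  have "s \<le> 2 / \<kappa> * exp (\<kappa> * s / 2)"
    using exp_ge_add_one_self[of "\<kappa> * s / 2"] assms by (simp add: field_simps)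
  then have "s * exp (- \<kappa> * s) \<le> 2 / \<kappa> * exp (\<kappa> * s / 2) * exp (- \<kappa> * s)"
    by (intro mult_right_mono) auto
  also have "\<dots> = 2 / \<kappa> * exp (- (\<kappa> / 2) * s)"
    by (simp add: mult.assoc exp_add[symmetric])
  finally show ?thesis .
qed

lemma boltzmann_le_gaussian:
  assumes "admissible_potential r \<Psi>" and "finite B"
  obtains \<kappa> C where "\<kappa> > 0" "C \<ge> 0"
    and "\<And>x. boltzmann \<Psi> r B (\<lambda>_. 0) x \<le> ennreal (C * exp (- \<kappa> * (\<Sum>j\<in>B. (x j)\<^sup>2)))"
proof -
  obtain \<kappa> K where "\<kappa> > 0"
    and coercive: "\<And>x. K + \<kappa> * (\<Sum>j\<in>B. (x j)\<^sup>2) \<le> hamiltonian \<Psi> r B (ext_bc B 0 x)"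
    using hamiltonian_coercive[OF assms] by blast
  have "exp (- hamiltonian \<Psi> r B (ext_bc B 0 x)) \<le> exp (- K) * exp (- \<kappa> * (\<Sum>j\<in>B. (x j)\<^sup>2))" for x
    using coercive[of x] by (simp add: exp_add[symmetric])
  then show ?thesis
    using \<open>\<kappa> > 0\<close> by (intro that[of \<kappa> "exp (- K)"]) (auto simp: boltzmann_def ext_bc_eq_ext_bc_fun)
qed

lemma nn_integral_boltzmann_finite:
  assumes "admissible_potential r \<Psi>" and "finite B"
  shows "integral\<^sup>N (product_lborel B) (boltzmann \<Psi> r B (\<lambda>_. 0)) < \<infinity>"
proof -
  obtain \<kappa> C where "\<kappa> > 0" "C \<ge> 0"
    and bound: "\<And>x. boltzmann \<Psi> r B (\<lambda>_. 0) x \<le> ennreal (C * exp (- \<kappa> * (\<Sum>j\<in>B. (x j)\<^sup>2)))"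
    using boltzmann_le_gaussian[OF assms] by blast
  have "integral\<^sup>N (product_lborel B) (boltzmann \<Psi> r B (\<lambda>_. 0))
      \<le> (\<integral>\<^sup>+x. ennreal C * ennreal (exp (- \<kappa> * (\<Sum>j\<in>B. (x j)\<^sup>2))) \<partial>product_lborel B)"
    using bound \<open>C \<ge> 0\<close> by (intro nn_integral_mono) (simp add: ennreal_mult)
  also have "\<dots> = ennreal C * (\<integral>\<^sup>+x. ennreal (exp (- \<kappa> * (\<Sum>j\<in>B. (x j)\<^sup>2))) \<partial>product_lborel B)"
    by (rule nn_integral_cmult) measurable
  also have "\<dots> < \<infinity>"
    using nn_integral_exp_neg_sum_squares_finite[OF \<open>\<kappa> > 0\<close> assms(2)] by (simp add: ennreal_mult_less_top)
  finally show ?thesis .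
qed

lemma nn_integral_boltzmann_second_moment_finite:
  assumes "admissible_potential r \<Psi>" and "finite B" "i \<in> B"
  shows "(\<integral>\<^sup>+x. ennreal ((x i)\<^sup>2) * boltzmann \<Psi> r B (\<lambda>_. 0) x \<partial>product_lborel B) < \<infinity>"
proof -
  obtain \<kappa> C where "\<kappa> > 0" "C \<ge> 0"
    and bound: "\<And>x. boltzmann \<Psi> r B (\<lambda>_. 0) x \<le> ennreal (C * exp (- \<kappa> * (\<Sum>j\<in>B. (x j)\<^sup>2)))"
    using boltzmann_le_gaussian[OF assms(1,2)] by blast
  have "ennreal ((x i)\<^sup>2) * boltzmann \<Psi> r B (\<lambda>_. 0) x
      \<le> ennreal (C * (2 / \<kappa>)) * ennreal (exp (- (\<kappa> / 2) * (\<Sum>j\<in>B. (x j)\<^sup>2)))" for x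
  proof -
    let ?S = "\<Sum>j\<in>B. (x j)\<^sup>2"
    have "(x i)\<^sup>2 \<le> ?S"
      by (rule member_le_sum) (use assms(2,3) in auto)
    then have "(x i)\<^sup>2 * (C * exp (- \<kappa> * ?S)) \<le> C * (?S * exp (- \<kappa> * ?S))"
      using \<open>C \<ge> 0\<close> by (simp add: mult.left_commute mult_left_mono mult_right_mono)
    also have "\<dots> \<le> C * (2 / \<kappa> * exp (- (\<kappa> / 2) * ?S))"
      by (intro mult_left_mono mult_exp_neg_le \<open>\<kappa> > 0\<close> \<open>C \<ge> 0\<close>)
    finally have "ennreal ((x i)\<^sup>2) * ennreal (C * exp (- \<kappa> * ?S))
        \<le> ennreal (C * (2 / \<kappa>)) * ennreal (exp (- (\<kappa> / 2) * ?S))"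
      using \<open>\<kappa> > 0\<close> \<open>C \<ge> 0\<close> by (simp add: ennreal_mult'[symmetric] ennreal_leI mult.assoc)
    then show ?thesis
      using bound[of x] by (meson mult_left_mono order_trans zero_le)
  qed
  then have "(\<integral>\<^sup>+x. ennreal ((x i)\<^sup>2) * boltzmann \<Psi> r B (\<lambda>_. 0) x \<partial>product_lborel B)
      \<le> ennreal (C * (2 / \<kappa>)) * (\<integral>\<^sup>+x. ennreal (exp (- (\<kappa> / 2) * (\<Sum>j\<in>B. (x j)\<^sup>2))) \<partial>product_lborel B)"
    by (subst nn_integral_cmult[symmetric]) (measurable, intro nn_integral_mono)
  also have "\<dots> < \<infinity>"
    using nn_integral_exp_neg_sum_squares_finite[of "\<kappa> / 2", OF _ assms(2)] \<open>\<kappa> > 0\<close>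
    by (simp add: ennreal_mult_less_top)
  finally show ?thesis .
qed

lemma nn_integral_boltzmann_nonzero:
  assumes "finite B" "\<And>k. \<Psi> k \<in> borel_measurable borel"
  shows "integral\<^sup>N (product_lborel B) (boltzmann \<Psi> r B G) \<noteq> 0"
proof
  assume "integral\<^sup>N (product_lborel B) (boltzmann \<Psi> r B G) = 0"
  then have "AE x in product_lborel B. boltzmann \<Psi> r B G x = 0"
    using nn_integral_0_iff_AE[OF borel_measurable_boltzmann[OF assms(2)]] by simp
  moreover have "AE x in product_lborel B. boltzmann \<Psi> r B G x \<noteq> 0"
    by (simp add: boltzmann_def)
  ultimately have "AE x in product_lborel B. False"
    by eventually_elim simp
  then have "emeasure (product_lborel B) (space (product_lborel B)) = 0"
    by (simp add: ae_filter_eq_bot_iff[symmetric] trivial_limit_def)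
  moreover have "emeasure (product_lborel B) (space (product_lborel B)) = (\<Prod>j\<in>B. emeasure lborel (UNIV :: real set))"
    unfolding space_PiM by (subst lborel_product.emeasure_PiM[OF assms(1)]) auto
  ultimately show False by simp
qed

lemma borel_measurable_ext_bc_component [measurable]:
  "(\<lambda>h. ext_bc \<Lambda> b h j) \<in> borel_measurable (product_lborel \<Lambda>)"
  by (cases "j \<in> \<Lambda>") (simp_all add: ext_bc_def)

lemma borel_measurable_indicator_box_ext_bc:
  assumes "finite A"
  shows "(\<lambda>h. indicator {h. \<forall>j\<in>A. \<bar>h j\<bar> \<le> a} (ext_bc \<Lambda> b h) :: real) \<in> borel_measurable (product_lborel \<Lambda>)"
proof -
  have "Measurable.pred (product_lborel \<Lambda>) (\<lambda>h. \<forall>j\<in>A. \<bar>ext_bc \<Lambda> b h j\<bar> \<le> a)"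
    using assms by measurable
  then show ?thesis
    by (simp add: indicator_def of_bool_def)
qed

lemma integral_gibbs_weight_eq_nn_integral:
  assumes "\<And>k. \<Psi> k \<in> borel_measurable borel" "\<And>h. 0 \<le> f h"
    and "(\<lambda>h. f (ext_bc \<Lambda> b h)) \<in> borel_measurable (product_lborel \<Lambda>)"
  shows "(\<integral>h. f (ext_bc \<Lambda> b h) * gibbs_weight \<Psi> r \<Lambda> b h \<partial>product_lborel \<Lambda>)
       = enn2real (\<integral>\<^sup>+h. ennreal (f (ext_bc \<Lambda> b h)) * boltzmann \<Psi> r \<Lambda> (\<lambda>_. b) h \<partial>product_lborel \<Lambda>)"
proof -
  have "(\<lambda>h. hamiltonian \<Psi> r \<Lambda> (ext_bc_fun \<Lambda> (\<lambda>_. b) h)) \<in> borel_measurable (product_lborel \<Lambda>)"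
    by (rule borel_measurable_hamiltonian_ext_bc_fun[OF assms(1)])
  then have weight: "gibbs_weight \<Psi> r \<Lambda> b \<in> borel_measurable (product_lborel \<Lambda>)"
    unfolding gibbs_weight_def ext_bc_eq_ext_bc_fun by measurable
  have "(\<integral>h. f (ext_bc \<Lambda> b h) * gibbs_weight \<Psi> r \<Lambda> b h \<partial>product_lborel \<Lambda>)
      = enn2real (\<integral>\<^sup>+h. ennreal (f (ext_bc \<Lambda> b h) * gibbs_weight \<Psi> r \<Lambda> b h) \<partial>product_lborel \<Lambda>)"
    using assms(2) by (intro integral_eq_nn_integral borel_measurable_times assms(3) weight)
      (auto simp: gibbs_weight_def)
  then show ?thesis
    using assms(2) by (simp add: boltzmann_const ennreal_mult')
qed

lemma gibbs_exp_eq_nn_integral: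
  assumes "\<And>k. \<Psi> k \<in> borel_measurable borel" "\<And>h. 0 \<le> f h"
    and "(\<lambda>h. f (ext_bc \<Lambda> b h)) \<in> borel_measurable (product_lborel \<Lambda>)"
  shows "gibbs_exp \<Psi> r \<Lambda> b f
       = enn2real (\<integral>\<^sup>+h. ennreal (f (ext_bc \<Lambda> b h)) * boltzmann \<Psi> r \<Lambda> (\<lambda>_. b) h \<partial>product_lborel \<Lambda>)
         / enn2real (integral\<^sup>N (product_lborel \<Lambda>) (boltzmann \<Psi> r \<Lambda> (\<lambda>_. b)))"
  unfolding gibbs_exp_def
  using integral_gibbs_weight_eq_nn_integral[OF assms]
    integral_gibbs_weight_eq_nn_integral[OF assms(1), where f="\<lambda>_. 1"]
  by simp

lemma gibbs_exp_nonneg: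
  assumes "\<And>h. 0 \<le> f h"
  shows "0 \<le> gibbs_exp \<Psi> r \<Lambda> b f"
  unfolding gibbs_exp_def gibbs_weight_def using assms
  by (intro divide_nonneg_nonneg integral_nonneg) auto

lemma gibbs_cond_le:
  assumes "\<And>k. \<Psi> k \<in> borel_measurable borel" "\<And>h. 0 \<le> f h" "0 \<le> C"
    and [measurable]: "(\<lambda>h. f (ext_bc \<Lambda> b h)) \<in> borel_measurable (product_lborel \<Lambda>)"
      "(\<lambda>h. indicator E (ext_bc \<Lambda> b h) :: real) \<in> borel_measurable (product_lborel \<Lambda>)"
    and bound: "(\<integral>\<^sup>+h. ennreal (f (ext_bc \<Lambda> b h) * indicator E (ext_bc \<Lambda> b h)) * boltzmann \<Psi> r \<Lambda> (\<lambda>_. b) h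
        \<partial>product_lborel \<Lambda>)
      \<le> ennreal C * (\<integral>\<^sup>+h. ennreal (indicator E (ext_bc \<Lambda> b h)) * boltzmann \<Psi> r \<Lambda> (\<lambda>_. b) h
        \<partial>product_lborel \<Lambda>)" (is "?N \<le> ennreal C * ?D")
  shows "gibbs_cond \<Psi> r \<Lambda> b f E \<le> C"
proof -
  let ?Z = "integral\<^sup>N (product_lborel \<Lambda>) (boltzmann \<Psi> r \<Lambda> (\<lambda>_. b))"
  have "gibbs_cond \<Psi> r \<Lambda> b f E = (enn2real ?N / enn2real ?Z) / (enn2real ?D / enn2real ?Z)"
    unfolding gibbs_cond_def using assms(2)
    by (simp add: gibbs_exp_eq_nn_integral[OF assms(1)])
  also have "\<dots> \<le> C"
  proof (cases "enn2real ?Z = 0 \<or> enn2real ?D = 0")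
    case True
    then show ?thesis using \<open>0 \<le> C\<close> by auto
  next
    case False
    then have "?D \<noteq> \<infinity>" by auto
    then have "enn2real ?N \<le> enn2real (ennreal C * ?D)"
      using bound by (intro enn2real_mono) (auto simp: ennreal_mult_eq_top_iff less_top[symmetric])
    then have "enn2real ?N \<le> C * enn2real ?D"
      using \<open>0 \<le> C\<close> by (simp add: enn2real_mult)
    moreover have "0 < enn2real ?D" using False by (simp add: less_le)
    ultimately show ?thesis using False by (simp add: divide_le_eq)
  qed
  finally show ?thesis .
qed

section \<open>Conditioning on a subset\<close>

lemma boltzmann_second_moment_le_gibbs_exp:
  assumes adm: "admissible_potential r \<Psi>" and "finite B" "i \<in> B" and "\<And>j. \<bar>G j\<bar> \<le> a"
  shows "(\<integral>\<^sup>+x. ennreal ((x i)\<^sup>2) * boltzmann \<Psi> r B G x \<partial>product_lborel B)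
       \<le> ennreal (4 * a\<^sup>2 + 4 * gibbs_exp \<Psi> r B 0 (\<lambda>h. (h i)\<^sup>2)) * integral\<^sup>N (product_lborel B) (boltzmann \<Psi> r B G)"
proof -
  note convex = admissible_potential_convex[OF adm]
  have measurable_\<Psi>: "\<And>k. \<Psi> k \<in> borel_measurable borel"
    by (rule borel_measurable_convex_on_UNIV[OF convex])
  obtain z where z: "integral\<^sup>N (product_lborel B) (boltzmann \<Psi> r B (\<lambda>_. 0)) = ennreal z" "z > 0"
    using nn_integral_boltzmann_finite[OF adm assms(2)] nn_integral_boltzmann_nonzero[where \<Psi>=\<Psi> and r=r and G="\<lambda>_. 0", OF assms(2) measurable_\<Psi>]
    by (cases "integral\<^sup>N (product_lborel B) (boltzmann \<Psi> r B (\<lambda>_. 0))") (auto simp: less_le)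
  obtain m where m: "(\<integral>\<^sup>+x. ennreal ((x i)\<^sup>2) * boltzmann \<Psi> r B (\<lambda>_. 0) x \<partial>product_lborel B) = ennreal m" "m \<ge> 0"
    using nn_integral_boltzmann_second_moment_finite[OF adm assms(2,3)] by (cases rule: ennreal_cases) auto
  have "gibbs_exp \<Psi> r B 0 (\<lambda>h. (h i)\<^sup>2) = m / z"
  proof -
    have "(\<integral>\<^sup>+h. ennreal ((ext_bc B 0 h i)\<^sup>2) * boltzmann \<Psi> r B (\<lambda>_. 0) h \<partial>product_lborel B) = ennreal m"
      using m(1) \<open>i \<in> B\<close> by (simp add: ext_bc_def)
    then show ?thesis
      using z m(2) by (subst gibbs_exp_eq_nn_integral[where \<Psi>=\<Psi>, OF measurable_\<Psi>]) auto
  qed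
  then have "ennreal z * ennreal (4 * a\<^sup>2 + 4 * gibbs_exp \<Psi> r B 0 (\<lambda>h. (h i)\<^sup>2)) = ennreal (4 * a\<^sup>2 * z + 4 * m)"
    using z(2) m(2) by (simp add: ennreal_mult'[symmetric] field_simps)
  also have "\<dots> = ennreal (4 * a\<^sup>2) * ennreal z + 4 * ennreal m"
    using z(2) m(2) by (simp add: ennreal_plus ennreal_mult)
  finally have prefactor: "ennreal z * ennreal (4 * a\<^sup>2 + 4 * gibbs_exp \<Psi> r B 0 (\<lambda>h. (h i)\<^sup>2))
      = ennreal (4 * a\<^sup>2) * ennreal z + 4 * ennreal m" .
  have "ennreal z * (\<integral>\<^sup>+x. ennreal ((x i)\<^sup>2) * boltzmann \<Psi> r B G x \<partial>product_lborel B)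
      \<le> ennreal z * (ennreal (4 * a\<^sup>2 + 4 * gibbs_exp \<Psi> r B 0 (\<lambda>h. (h i)\<^sup>2))
          * integral\<^sup>N (product_lborel B) (boltzmann \<Psi> r B G))"
    using boltzmann_second_moment_le[where \<Psi>=\<Psi> and r=r and G=G, OF assms(2,3) convex assms(4)] z(1) m(1)
    by (simp add: mult.assoc[symmetric] prefactor)
  then show ?thesis
    using z(2) by (simp add: ennreal_mult_le_mult_iff)
qed

lemma nn_integral_boltzmann_disintegrate:
  assumes "finite \<Lambda>" "A \<inter> B = {}" "\<Lambda> = A \<union> B" "\<And>k. \<Psi> k \<in> borel_measurable borel"
    and "F \<in> borel_measurable (product_lborel \<Lambda>)"
  shows "(\<integral>\<^sup>+h. F h * boltzmann \<Psi> r \<Lambda> (\<lambda>_. 0) h \<partial>product_lborel \<Lambda>)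
       = (\<integral>\<^sup>+g. \<integral>\<^sup>+\<phi>. ennreal (exp (hamiltonian \<Psi> r B (ext_bc A 0 g) - hamiltonian \<Psi> r \<Lambda> (ext_bc A 0 g)))
            * (F (merge A B (g, \<phi>)) * boltzmann \<Psi> r B (ext_bc A 0 g) \<phi>) \<partial>product_lborel B \<partial>product_lborel A)"
proof -
  have "finite A" "finite B" using assms(1,3) by auto
  have "(\<lambda>h. F h * boltzmann \<Psi> r \<Lambda> (\<lambda>_. 0) h) \<in> borel_measurable (product_lborel (A \<union> B))"
    using assms(5) borel_measurable_boltzmann[OF assms(4)] unfolding assms(3) by measurable
  from lborel_product.product_nn_integral_fold[OF assms(2) \<open>finite A\<close> \<open>finite B\<close> this]
  have "(\<integral>\<^sup>+h. F h * boltzmann \<Psi> r \<Lambda> (\<lambda>_. 0) h \<partial>product_lborel \<Lambda>)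
      = (\<integral>\<^sup>+g. \<integral>\<^sup>+\<phi>. F (merge A B (g, \<phi>)) * boltzmann \<Psi> r \<Lambda> (\<lambda>_. 0) (merge A B (g, \<phi>))
          \<partial>product_lborel B \<partial>product_lborel A)"
    by (simp only: assms(3))
  then show ?thesis by (simp add: boltzmann_merge[OF assms(1-3)] mult_ac)
qed

text \<open>Integrating out the spins in \<open>B\<close> first, each fibre is a Gibbs weight on \<open>B\<close> whose boundary
  condition is bounded by \<open>a\<close> on the event.\<close>

lemma nn_integral_conditional_second_moment_le:
  assumes "finite \<Lambda>" "A \<inter> B = {}" "\<Lambda> = A \<union> B" "i \<in> B" "0 \<le> a"
    and measurable_\<Psi>: "\<And>k. \<Psi> k \<in> borel_measurable borel"
    and local_bound: "\<And>G. (\<And>j. \<bar>G j\<bar> \<le> a) \<Longrightarrow>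
      (\<integral>\<^sup>+x. ennreal ((x i)\<^sup>2) * boltzmann \<Psi> r B G x \<partial>product_lborel B)
        \<le> ennreal C * integral\<^sup>N (product_lborel B) (boltzmann \<Psi> r B G)"
  defines "E \<equiv> {h. \<forall>j\<in>A. \<bar>h j\<bar> \<le> a}"
  shows "(\<integral>\<^sup>+h. ennreal ((ext_bc \<Lambda> 0 h i)\<^sup>2 * indicator E (ext_bc \<Lambda> 0 h)) * boltzmann \<Psi> r \<Lambda> (\<lambda>_. 0) h
           \<partial>product_lborel \<Lambda>)
       \<le> ennreal C * (\<integral>\<^sup>+h. ennreal (indicator E (ext_bc \<Lambda> 0 h)) * boltzmann \<Psi> r \<Lambda> (\<lambda>_. 0) h
           \<partial>product_lborel \<Lambda>)"
proof -
  let ?w = "\<lambda>g. ennreal (exp (hamiltonian \<Psi> r B (ext_bc A 0 g) - hamiltonian \<Psi> r \<Lambda> (ext_bc A 0 g)))"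
  let ?\<rho> = "\<lambda>g. boltzmann \<Psi> r B (ext_bc A 0 g)"
  have "finite A" using assms(1,3) by auto
  have [measurable]: "boltzmann \<Psi> r B G \<in> borel_measurable (product_lborel B)"
    "(\<lambda>h. indicator E (ext_bc \<Lambda> 0 h) :: real) \<in> borel_measurable (product_lborel \<Lambda>)"
    "(\<lambda>x. x i) \<in> borel_measurable (product_lborel B)" for G
    using borel_measurable_boltzmann[OF measurable_\<Psi>] borel_measurable_indicator_box_ext_bc[OF \<open>finite A\<close>]
      \<open>i \<in> B\<close> unfolding E_def by auto
  have numerator: "(\<lambda>h. ennreal ((ext_bc \<Lambda> 0 h i)\<^sup>2 * indicator E (ext_bc \<Lambda> 0 h)))
      \<in> borel_measurable (product_lborel \<Lambda>)"
    and denominator: "(\<lambda>h. ennreal C * ennreal (indicator E (ext_bc \<Lambda> 0 h))) \<in> borel_measurable (product_lborel \<Lambda>)"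
    by measurable
  note disintegrate = nn_integral_boltzmann_disintegrate[OF assms(1-3) measurable_\<Psi>]
  have merge: "ext_bc \<Lambda> 0 (merge A B (g, \<phi>)) i = \<phi> i"
    "indicator E (ext_bc \<Lambda> 0 (merge A B (g, \<phi>))) = (indicator E g :: real)" for g \<phi>
    using assms(2,3,4) by (auto simp: ext_bc_def merge_def E_def indicator_def)
  have "(\<integral>\<^sup>+h. ennreal ((ext_bc \<Lambda> 0 h i)\<^sup>2 * indicator E (ext_bc \<Lambda> 0 h)) * boltzmann \<Psi> r \<Lambda> (\<lambda>_. 0) h
        \<partial>product_lborel \<Lambda>)
      = (\<integral>\<^sup>+g. indicator E g * ?w g * (\<integral>\<^sup>+\<phi>. ennreal ((\<phi> i)\<^sup>2) * ?\<rho> g \<phi> \<partial>product_lborel B) \<partial>product_lborel A)"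
    by (subst disintegrate[OF numerator]) (auto intro!: nn_integral_cong simp: merge nn_integral_cmult[symmetric]
        ennreal_mult' ennreal_indicator mult_ac)
  also have "\<dots> \<le> (\<integral>\<^sup>+g. indicator E g * ?w g * (ennreal C * integral\<^sup>N (product_lborel B) (?\<rho> g))
      \<partial>product_lborel A)"
  proof (intro nn_integral_mono)
    fix g
    show "indicator E g * ?w g * (\<integral>\<^sup>+\<phi>. ennreal ((\<phi> i)\<^sup>2) * ?\<rho> g \<phi> \<partial>product_lborel B)
        \<le> indicator E g * ?w g * (ennreal C * integral\<^sup>N (product_lborel B) (?\<rho> g))"
    proof (cases "g \<in> E")
      case True
      then have "\<bar>ext_bc A 0 g j\<bar> \<le> a" for j
        using \<open>0 \<le> a\<close> by (auto simp: E_def ext_bc_def)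
      then show ?thesis by (intro mult_left_mono local_bound) auto
    qed simp
  qed
  also have "\<dots> = (\<integral>\<^sup>+h. ennreal C * ennreal (indicator E (ext_bc \<Lambda> 0 h)) * boltzmann \<Psi> r \<Lambda> (\<lambda>_. 0) h
      \<partial>product_lborel \<Lambda>)"
    by (subst disintegrate[OF denominator]) (auto intro!: nn_integral_cong simp: merge nn_integral_cmult
        nn_integral_multc ennreal_indicator mult_ac)
  also have "\<dots> = ennreal C * (\<integral>\<^sup>+h. ennreal (indicator E (ext_bc \<Lambda> 0 h)) * boltzmann \<Psi> r \<Lambda> (\<lambda>_. 0) h
      \<partial>product_lborel \<Lambda>)"
    unfolding mult.assoc
    by (intro nn_integral_cmult borel_measurable_times_ennreal measurable_compose[OF _ measurable_ennreal]
        borel_measurable_boltzmann measurable_\<Psi>) measurable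
  finally show ?thesis .
qed

lemma nn_integral_conditional_second_moment_le_box:
  fixes a :: real
  assumes "finite A" "i \<in> A" "\<And>k. \<Psi> k \<in> borel_measurable borel"
  defines "E \<equiv> {h. \<forall>j\<in>A. \<bar>h j\<bar> \<le> a}"
  shows "(\<integral>\<^sup>+h. ennreal ((ext_bc \<Lambda> 0 h i)\<^sup>2 * indicator E (ext_bc \<Lambda> 0 h)) * boltzmann \<Psi> r \<Lambda> (\<lambda>_. 0) h
           \<partial>product_lborel \<Lambda>)
       \<le> ennreal (a\<^sup>2) * (\<integral>\<^sup>+h. ennreal (indicator E (ext_bc \<Lambda> 0 h)) * boltzmann \<Psi> r \<Lambda> (\<lambda>_. 0) h
           \<partial>product_lborel \<Lambda>)"
proof -
  have [measurable]: "boltzmann \<Psi> r \<Lambda> (\<lambda>_. 0) \<in> borel_measurable (product_lborel \<Lambda>)"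
    "(\<lambda>h. indicator E (ext_bc \<Lambda> 0 h) :: real) \<in> borel_measurable (product_lborel \<Lambda>)"
    using borel_measurable_boltzmann[OF assms(3)] borel_measurable_indicator_box_ext_bc[OF assms(1)]
    unfolding E_def by auto
  have pointwise: "(ext_bc \<Lambda> 0 h i)\<^sup>2 * indicator E (ext_bc \<Lambda> 0 h) \<le> a\<^sup>2 * indicator E (ext_bc \<Lambda> 0 h)" for h
  proof (cases "ext_bc \<Lambda> 0 h \<in> E")
    case True
    then have "\<bar>ext_bc \<Lambda> 0 h i\<bar> \<le> a" using assms(2) unfolding E_def by auto
    then have "(ext_bc \<Lambda> 0 h i)\<^sup>2 \<le> a\<^sup>2" by (metis abs_le_square_iff abs_of_nonneg abs_ge_zero order_trans)
    then show ?thesis using True by simp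
  qed simp
  have "(\<integral>\<^sup>+h. ennreal ((ext_bc \<Lambda> 0 h i)\<^sup>2 * indicator E (ext_bc \<Lambda> 0 h)) * boltzmann \<Psi> r \<Lambda> (\<lambda>_. 0) h
        \<partial>product_lborel \<Lambda>)
      \<le> (\<integral>\<^sup>+h. ennreal (a\<^sup>2) * (ennreal (indicator E (ext_bc \<Lambda> 0 h)) * boltzmann \<Psi> r \<Lambda> (\<lambda>_. 0) h)
        \<partial>product_lborel \<Lambda>)"
  proof (rule nn_integral_mono)
    fix h
    have "ennreal ((ext_bc \<Lambda> 0 h i)\<^sup>2 * indicator E (ext_bc \<Lambda> 0 h))
        \<le> ennreal (a\<^sup>2) * ennreal (indicator E (ext_bc \<Lambda> 0 h))"
      using ennreal_leI[OF pointwise[of h]] by (simp add: ennreal_mult)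
    then show "ennreal ((ext_bc \<Lambda> 0 h i)\<^sup>2 * indicator E (ext_bc \<Lambda> 0 h)) * boltzmann \<Psi> r \<Lambda> (\<lambda>_. 0) h
        \<le> ennreal (a\<^sup>2) * (ennreal (indicator E (ext_bc \<Lambda> 0 h)) * boltzmann \<Psi> r \<Lambda> (\<lambda>_. 0) h)"
      by (simp add: mult.assoc[symmetric] mult_right_mono)
  qed
  also have "\<dots> = ennreal (a\<^sup>2) * (\<integral>\<^sup>+h. ennreal (indicator E (ext_bc \<Lambda> 0 h)) * boltzmann \<Psi> r \<Lambda> (\<lambda>_. 0) h
      \<partial>product_lborel \<Lambda>)"
    by (rule nn_integral_cmult) measurable
  finally show ?thesis .
qed

lemma nn_integral_conditional_second_moment_le_gibbs_exp:
  fixes a :: real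
  assumes adm: "admissible_potential r \<Psi>" and "0 \<le> a" "finite \<Lambda>" "A \<subseteq> \<Lambda>" "i \<in> \<Lambda>"
  defines "E \<equiv> {h. \<forall>j\<in>A. \<bar>h j\<bar> \<le> a}"
    and "C \<equiv> 4 * a\<^sup>2 + 4 * gibbs_exp \<Psi> r (\<Lambda> - A) 0 (\<lambda>h. (h i)\<^sup>2)"
  shows "(\<integral>\<^sup>+h. ennreal ((ext_bc \<Lambda> 0 h i)\<^sup>2 * indicator E (ext_bc \<Lambda> 0 h)) * boltzmann \<Psi> r \<Lambda> (\<lambda>_. 0) h
           \<partial>product_lborel \<Lambda>)
       \<le> ennreal C * (\<integral>\<^sup>+h. ennreal (indicator E (ext_bc \<Lambda> 0 h)) * boltzmann \<Psi> r \<Lambda> (\<lambda>_. 0) h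
           \<partial>product_lborel \<Lambda>)"
proof -
  have measurable_\<Psi>: "\<And>k. \<Psi> k \<in> borel_measurable borel"
    by (rule borel_measurable_convex_on_UNIV[OF admissible_potential_convex[OF adm]])
  have "finite A" using assms(3,4) by (rule rev_finite_subset)
  show ?thesis
  proof (cases "i \<in> A")
    case True
    have "a\<^sup>2 \<le> C"
      unfolding C_def using gibbs_exp_nonneg[of "\<lambda>h. (h i)\<^sup>2"] by (smt (verit) zero_le_power2)
    show ?thesis
      unfolding E_def
      by (rule order_trans[OF nn_integral_conditional_second_moment_le_box[where \<Psi>=\<Psi> and r=r and \<Lambda>=\<Lambda>
          and a=a, OF \<open>finite A\<close> True measurable_\<Psi>]])
        (intro mult_right_mono ennreal_leI \<open>a\<^sup>2 \<le> C\<close> zero_le)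
  next
    case False
    then have "finite (\<Lambda> - A)" "i \<in> \<Lambda> - A" using assms(3,5) by auto
    with assms(2,3,4) show ?thesis
      unfolding E_def C_def
      by (intro nn_integral_conditional_second_moment_le[where B="\<Lambda> - A"] measurable_\<Psi>
          boltzmann_second_moment_le_gibbs_exp[OF adm]) auto
  qed
qed

theorem lemma6p3:
  fixes r :: nat and \<Psi> :: "site \<Rightarrow> real \<Rightarrow> real" and a :: real
    and \<Lambda> A :: "site set" and i :: site
  assumes "r \<ge> 1" and "admissible_potential r \<Psi>"
    and "a > 0" and "finite \<Lambda>" and "A \<subseteq> \<Lambda>" and "i \<in> \<Lambda>"
  shows "gibbs_cond \<Psi> r \<Lambda> 0 (\<lambda>h. (h i)\<^sup>2) {h. \<forall>j\<in>A. \<bar>h j\<bar> \<le> a}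
         \<le> 4 * a\<^sup>2 + 4 * gibbs_exp \<Psi> r (\<Lambda> - A) 0 (\<lambda>h. (h i)\<^sup>2)"
proof (rule gibbs_cond_le)
  show "\<Psi> k \<in> borel_measurable borel" for k
    by (rule borel_measurable_convex_on_UNIV[OF admissible_potential_convex[OF assms(2)]])
  show "0 \<le> 4 * a\<^sup>2 + 4 * gibbs_exp \<Psi> r (\<Lambda> - A) 0 (\<lambda>h. (h i)\<^sup>2)"
    using gibbs_exp_nonneg[of "\<lambda>h. (h i)\<^sup>2"] by simp
  show "(\<lambda>h. indicator {h. \<forall>j\<in>A. \<bar>h j\<bar> \<le> a} (ext_bc \<Lambda> 0 h) :: real) \<in> borel_measurable (product_lborel \<Lambda>)"
    using assms(4,5) by (intro borel_measurable_indicator_box_ext_bc) (rule rev_finite_subset)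
  show "(\<integral>\<^sup>+h. ennreal ((ext_bc \<Lambda> 0 h i)\<^sup>2 * indicator {h. \<forall>j\<in>A. \<bar>h j\<bar> \<le> a} (ext_bc \<Lambda> 0 h))
        * boltzmann \<Psi> r \<Lambda> (\<lambda>_. 0) h \<partial>product_lborel \<Lambda>)
      \<le> ennreal (4 * a\<^sup>2 + 4 * gibbs_exp \<Psi> r (\<Lambda> - A) 0 (\<lambda>h. (h i)\<^sup>2))
        * (\<integral>\<^sup>+h. ennreal (indicator {h. \<forall>j\<in>A. \<bar>h j\<bar> \<le> a} (ext_bc \<Lambda> 0 h)) * boltzmann \<Psi> r \<Lambda> (\<lambda>_. 0) h
          \<partial>product_lborel \<Lambda>)"
    using assms(2-6) by (intro nn_integral_conditional_second_moment_le_gibbs_exp) auto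
qed simp_all

end
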